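(* Let $a>0$. The vector space $\mathbb F=\{dF\in L^2(\mathbb H^2(-a^2)):F\text{ harmonic on }\mathbb H^2(-a^2)\}$ is a Banach space with respect to the norm $\|\cdot\|_{H^1(\mathbb H^2(-a^2))}$.
   Context: $\mathbb H^2(-a^2)$ is the two-dimensional hyperbolic space of constant curvature $-a^2$ with metric $g$, Levi-Civita connection $\overline\nabla$ and induced tensor metric $\overline g$. For a 1-form $u$, $\mathrm{Def}\,u=\frac12(\overline\nabla u+(\overline\nabla u)^T)$ and $\|u\|_{H^1}^2=\|u\|_{L^2}^2+2\|\mathrm{Def}\,u\|_{L^2}^2$. *)

theory Defs
  imports "HOL-Analysis.Analysis"
begin

text \<open>Upper half-plane model of H^2(-a^2): points (x,y) with y > 0 and metric
  g = (dx^2 + dy^2) / (a^2 y^2), which has constant curvature -a^2.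
  A 1-form u = u1 dx + u2 dy is represented by the pair of coefficient
  functions (u1, u2); it is taken to be 0 outside the half-plane.\<close>

definition Hpl :: "(real \<times> real) set" where
  "Hpl = {p. snd p > 0}"

definition pdx :: "(real \<times> real \<Rightarrow> real) \<Rightarrow> real \<times> real \<Rightarrow> real" where
  "pdx f p = frechet_derivative f (at p) (1, 0)"

definition pdy :: "(real \<times> real \<Rightarrow> real) \<Rightarrow> real \<times> real \<Rightarrow> real" where
  "pdy f p = frechet_derivative f (at p) (0, 1)"

definition lap_hyp :: "real \<Rightarrow> (real \<times> real \<Rightarrow> real) \<Rightarrow> real \<times> real \<Rightarrow> real" where
  "lap_hyp a F p = a\<^sup>2 * (snd p)\<^sup>2 * (pdx (pdx F) p + pdy (pdy F) p)"

definition harmonic_hyp :: "real \<Rightarrow> (real \<times> real \<Rightarrow> real) \<Rightarrow> bool" where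
  "harmonic_hyp a F \<longleftrightarrow>
     (\<forall>p\<in>Hpl. F differentiable (at p) \<and> pdx F differentiable (at p) \<and> pdy F differentiable (at p)) \<and>
     continuous_on Hpl (pdx (pdx F)) \<and> continuous_on Hpl (pdy (pdx F)) \<and>
     continuous_on Hpl (pdx (pdy F)) \<and> continuous_on Hpl (pdy (pdy F)) \<and>
     (\<forall>p\<in>Hpl. lap_hyp a F p = 0)"

definition dform :: "(real \<times> real \<Rightarrow> real) \<Rightarrow> real \<times> real \<Rightarrow> real \<times> real" where
  "dform F p = (if p \<in> Hpl then (pdx F p, pdy F p) else (0, 0))"

definition vol_hyp :: "real \<Rightarrow> real \<times> real \<Rightarrow> real" where
  "vol_hyp a p = 1 / (a\<^sup>2 * (snd p)\<^sup>2)"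

definition form_sq :: "real \<Rightarrow> (real \<times> real \<Rightarrow> real \<times> real) \<Rightarrow> real \<times> real \<Rightarrow> real" where
  "form_sq a u p = a\<^sup>2 * (snd p)\<^sup>2 * ((fst (u p))\<^sup>2 + (snd (u p))\<^sup>2)"

text \<open>Components of Def u = 1/2 (nabla u + (nabla u)^T), where
  (nabla u)_{ij} = d_i u_j - Gamma^k_{ij} u_k, with the Christoffel symbols of g:
  Gamma^k_{ij} u_k: (11) u2/y, (22) -u2/y, (12)=(21) -u1/y.\<close>
definition Def11 :: "(real \<times> real \<Rightarrow> real \<times> real) \<Rightarrow> real \<times> real \<Rightarrow> real" where
  "Def11 u p = pdx (\<lambda>q. fst (u q)) p - snd (u p) / snd p"
definition Def22 :: "(real \<times> real \<Rightarrow> real \<times> real) \<Rightarrow> real \<times> real \<Rightarrow> real" where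
  "Def22 u p = pdy (\<lambda>q. snd (u q)) p + snd (u p) / snd p"
definition Def12 :: "(real \<times> real \<Rightarrow> real \<times> real) \<Rightarrow> real \<times> real \<Rightarrow> real" where
  "Def12 u p = (pdx (\<lambda>q. snd (u q)) p + pdy (\<lambda>q. fst (u q)) p) / 2 + fst (u p) / snd p"

text \<open>Pointwise squared norm of the symmetric 2-tensor Def u:
  g^{ik} g^{jl} T_{ij} T_{kl} = (a y)^4 (T11^2 + 2 T12^2 + T22^2).\<close>
definition Def_sq :: "real \<Rightarrow> (real \<times> real \<Rightarrow> real \<times> real) \<Rightarrow> real \<times> real \<Rightarrow> real" where
  "Def_sq a u p = (a * snd p) ^ 4 * ((Def11 u p)\<^sup>2 + 2 * (Def12 u p)\<^sup>2 + (Def22 u p)\<^sup>2)"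

definition in_L2 :: "real \<Rightarrow> (real \<times> real \<Rightarrow> real \<times> real) \<Rightarrow> bool" where
  "in_L2 a u \<longleftrightarrow> set_integrable lborel Hpl (\<lambda>p. form_sq a u p * vol_hyp a p)"

definition L2sq :: "real \<Rightarrow> (real \<times> real \<Rightarrow> real \<times> real) \<Rightarrow> real" where
  "L2sq a u = (\<integral>p\<in>Hpl. form_sq a u p * vol_hyp a p \<partial>lborel)"

definition Def_in_L2 :: "real \<Rightarrow> (real \<times> real \<Rightarrow> real \<times> real) \<Rightarrow> bool" where
  "Def_in_L2 a u \<longleftrightarrow> set_integrable lborel Hpl (\<lambda>p. Def_sq a u p * vol_hyp a p)"

definition DefL2sq :: "real \<Rightarrow> (real \<times> real \<Rightarrow> real \<times> real) \<Rightarrow> real" where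
  "DefL2sq a u = (\<integral>p\<in>Hpl. Def_sq a u p * vol_hyp a p \<partial>lborel)"

definition H1norm :: "real \<Rightarrow> (real \<times> real \<Rightarrow> real \<times> real) \<Rightarrow> real" where
  "H1norm a u = sqrt (L2sq a u + 2 * DefL2sq a u)"

definition FF :: "real \<Rightarrow> (real \<times> real \<Rightarrow> real \<times> real) set" where
  "FF a = {dform F | F. harmonic_hyp a F \<and> in_L2 a (dform F)}"

end

theory Submission
  imports Defs "HOL-Complex_Analysis.Complex_Analysis"
begin

text \<open>In the upper half-plane model, with complex coordinate \<open>z = x + i y\<close>, a function \<open>F\<close> is
  harmonic for \<open>g = (dx\<^sup>2 + dy\<^sup>2) / (a y)\<^sup>2\<close> iff it is harmonic in the Euclidean sense, and
  then \<open>h = F\<^sub>x - i F\<^sub>y\<close> is holomorphic. Thus F is identified with the Bergman space of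
  holomorphic \<open>h\<close> with \<open>\<integral> |h|\<^sup>2 dx dy < \<infinity>\<close>; the \<open>L\<^sup>2\<close> norm of \<open>dF\<close> is the Bergman norm of
  \<open>h\<close>, and \<open>2 |Def dF|\<^sup>2 dvol = 4 a\<^sup>2 |y h' - i h|\<^sup>2 dx dy\<close>.

  The key estimate is \<open>\<integral> y\<^sup>2 |h'|\<^sup>2 \<le> C \<integral> |h|\<^sup>2\<close>. Cauchy's estimate on a disc of radius
  \<open>y/8\<close>, combined with the mean value inequality \<open>|h(z)|\<^sup>2 \<le> (2/\<pi>r\<^sup>2) \<integral>\<^sub>Q |h|\<^sup>2\<close> on the
  square \<open>Q\<close> of half-width \<open>2 r\<close> about \<open>z\<close>, bounds \<open>y\<^sup>2 |h'|\<^sup>2\<close> by an average of \<open>|h|\<^sup>2\<close>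
  over a Whitney square, and Fubini sums these averages. Hence the \<open>H\<^sup>1\<close> norm is equivalent
  to the Bergman norm on F, and completeness of F reduces to that of the Bergman space: an
  \<open>L\<^sup>2\<close>-Cauchy sequence converges locally uniformly (by the mean value inequality) to a
  holomorphic limit, which is also its \<open>L\<^sup>2\<close> limit by Fatou's lemma.\<close>

definition cplx :: "real \<times> real \<Rightarrow> complex" where
  "cplx p = Complex (fst p) (snd p)"

definition coords :: "complex \<Rightarrow> real \<times> real" where
  "coords z = (Re z, Im z)"

definition upper_half :: "complex set" where
  "upper_half = {z. 0 < Im z}"

text \<open>The 1-form \<open>dF = F\<^sub>x dx + F\<^sub>y dy\<close> of a harmonic function is encoded by the
  holomorphic function \<open>h = F\<^sub>x - i F\<^sub>y\<close>.\<close>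
definition form_of :: "(complex \<Rightarrow> complex) \<Rightarrow> real \<times> real \<Rightarrow> real \<times> real" where
  "form_of h p = (if p \<in> Hpl then (Re (h (cplx p)), - Im (h (cplx p))) else (0, 0))"

lemma cplx_simps [simp]: "Re (cplx p) = fst p" "Im (cplx p) = snd p"
  by (auto simp: cplx_def)

lemma cplx_Pair: "cplx (u, v) = Complex u v"
  by (simp add: cplx_def)

lemma cplx_coords [simp]: "cplx (coords z) = z" and coords_cplx [simp]: "coords (cplx p) = p"
  by (auto simp: cplx_def coords_def complex_eq_iff)

lemma cplx_in_upper_half_iff [simp]: "cplx p \<in> upper_half \<longleftrightarrow> p \<in> Hpl"
  by (simp add: upper_half_def Hpl_def)

lemma open_Hpl: "open Hpl"
  unfolding Hpl_def by (intro open_Collect_less continuous_intros)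

lemma sets_borel_Hpl [measurable, simp]: "Hpl \<in> sets borel"
  using open_Hpl by simp

lemma open_upper_half: "open upper_half"
  unfolding upper_half_def by (simp add: open_halfspace_Im_gt)

lemma bounded_linear_cplx: "bounded_linear cplx"
  by (rule bounded_linearI') (auto simp: cplx_def complex_eq_iff)

lemma bounded_linear_coords: "bounded_linear coords"
  by (rule bounded_linearI') (auto simp: coords_def)

lemma continuous_on_compose_cplx:
  "continuous_on upper_half g \<Longrightarrow> continuous_on Hpl (\<lambda>p. g (cplx p))"
  by (rule continuous_on_compose2[OF _ linear_continuous_on[OF bounded_linear_cplx]]) auto

lemma holomorphic_on_upper_half_continuous:
  assumes "h holomorphic_on upper_half"
  shows "continuous_on Hpl (\<lambda>p. h (cplx p))" "continuous_on Hpl (\<lambda>p. deriv h (cplx p))"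
  using assms open_upper_half holomorphic_deriv holomorphic_on_imp_continuous_on
  by (blast intro: continuous_on_compose_cplx)+

lemma has_derivative_holomorphic_cplx:
  assumes "h holomorphic_on upper_half" "p \<in> Hpl"
  shows "((\<lambda>q. h (cplx q)) has_derivative (\<lambda>v. deriv h (cplx p) * cplx v)) (at p)"
proof -
  have "(h has_field_derivative deriv h (cplx p)) (at (cplx p))"
    using assms open_upper_half holomorphic_derivI by fastforce
  then have "(h has_derivative (\<lambda>w. deriv h (cplx p) * w)) (at (cplx p))"
    by (simp add: has_field_derivative_def)
  moreover have "(cplx has_derivative cplx) (at p)"
    using bounded_linear_cplx bounded_linear_imp_has_derivative by blast
  ultimately show ?thesis
    using has_derivative_compose[of cplx cplx p UNIV h] by (simp add: o_def)
qed

lemma pd_has_derivative_on_Hpl: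
  assumes "(g has_derivative g') (at p)" "p \<in> Hpl" "\<And>q. q \<in> Hpl \<Longrightarrow> f q = g q"
  shows "pdx f p = g' (1, 0)" "pdy f p = g' (0, 1)" "f differentiable (at p)"
proof -
  have "(f has_derivative g') (at p)"
    using has_derivative_transform_within_open[OF assms(1) open_Hpl assms(2)] assms(3) by metis
  moreover from this have "frechet_derivative f (at p) = g'"
    by (rule frechet_derivative_at[symmetric])
  ultimately show "pdx f p = g' (1, 0)" "pdy f p = g' (0, 1)" "f differentiable (at p)"
    unfolding pdx_def pdy_def differentiable_def by auto
qed

lemma pd_Re_holomorphic:
  assumes "h holomorphic_on upper_half" "p \<in> Hpl" "\<And>q. q \<in> Hpl \<Longrightarrow> f q = Re (h (cplx q))"
  shows "pdx f p = Re (deriv h (cplx p))" "pdy f p = - Im (deriv h (cplx p))"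
    "f differentiable (at p)"
  using pd_has_derivative_on_Hpl[OF bounded_linear.has_derivative[OF bounded_linear_Re
      has_derivative_holomorphic_cplx[OF assms(1,2)]] assms(2,3)]
  by auto

lemma deriv_times_i:
  assumes "h holomorphic_on upper_half" "z \<in> upper_half"
  shows "deriv (\<lambda>w. \<i> * h w) z = \<i> * deriv h z"
  using assms open_upper_half holomorphic_on_imp_differentiable_at deriv_cmult by blast

lemma set_integral_nonneg:
  fixes f :: "'a \<Rightarrow> real"
  assumes "\<And>x. x \<in> A \<Longrightarrow> 0 \<le> f x"
  shows "0 \<le> (LINT x:A|M. f x)"
  unfolding set_lebesgue_integral_def
  by (intro Bochner_Integration.integral_nonneg) (use assms in \<open>auto simp: indicator_def\<close>)

lemma set_integral_mono_subset:
  fixes f :: "'a \<Rightarrow> real"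
  assumes "set_integrable M A f" "set_integrable M B f" "A \<subseteq> B" "\<And>x. x \<in> B \<Longrightarrow> 0 \<le> f x"
  shows "(LINT x:A|M. f x) \<le> (LINT x:B|M. f x)"
  unfolding set_lebesgue_integral_def
  by (rule integral_mono) (use assms in \<open>auto simp: set_integrable_def indicator_def\<close>)

lemma nn_integral_eq_set_integral:
  fixes f :: "'a \<Rightarrow> real"
  assumes "set_integrable M A f" "\<And>x. x \<in> A \<Longrightarrow> 0 \<le> f x"
  shows "(\<integral>\<^sup>+ x. ennreal (indicator A x * f x) \<partial>M) = ennreal (LINT x:A|M. f x)"
proof -
  have "integrable M (\<lambda>x. indicator A x * f x)"
    using assms(1) by (simp add: set_integrable_def)
  from nn_integral_eq_integral[OF this] show ?thesis
    using assms(2) by (simp add: set_lebesgue_integral_def indicator_def)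
qed

lemma set_integrable_of_nn_integral_le:
  fixes g :: "'a \<Rightarrow> real"
  assumes g: "set_borel_measurable M A g" "\<And>x. x \<in> A \<Longrightarrow> 0 \<le> g x"
    and bound: "(\<integral>\<^sup>+ x. ennreal (indicator A x * g x) \<partial>M) \<le> ennreal B" and B: "0 \<le> B"
  shows "set_integrable M A g" and "(LINT x:A|M. g x) \<le> B"
proof -
  have meas: "(\<lambda>x. indicator A x * g x) \<in> borel_measurable M"
    using g(1) by (simp add: set_borel_measurable_def)
  have nonneg: "0 \<le> indicator A x * g x" for x
    using g(2) by (simp add: indicator_def)
  have "integrable M (\<lambda>x. indicator A x * g x)"
    using bound by (intro integrableI_nonneg meas) (auto simp: nonneg top.not_eq_extremum intro: le_less_trans)
  then show "set_integrable M A g"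
    by (simp add: set_integrable_def)
  have "(LINT x:A|M. g x) = enn2real (\<integral>\<^sup>+ x. ennreal (indicator A x * g x) \<partial>M)"
    unfolding set_lebesgue_integral_def using meas nonneg by (simp add: integral_eq_nn_integral)
  also have "\<dots> \<le> B"
    using enn2real_mono[OF bound] B by simp
  finally show "(LINT x:A|M. g x) \<le> B" .
qed

lemma set_integrable_cbox_continuous:
  fixes G :: "'a::euclidean_space \<Rightarrow> real"
  assumes "continuous_on (cbox a b) G"
  shows "set_integrable lborel (cbox a b) G" "(LINT p:cbox a b|lborel. G p) = integral (cbox a b) G"
proof -
  show si: "set_integrable lborel (cbox a b) G"
    unfolding set_integrable_def using borel_integrable_compact[OF compact_cbox assms] by simp
  show "(LINT p:cbox a b|lborel. G p) = integral (cbox a b) G"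
    using set_borel_integral_eq_integral(2)[OF si] by simp
qed

lemma set_borel_measurable_continuous_on_Hpl:
  fixes G :: "real \<times> real \<Rightarrow> 'b::real_normed_vector"
  assumes "continuous_on Hpl G"
  shows "set_borel_measurable lborel Hpl G"
  unfolding set_borel_measurable_def
  using borel_measurable_continuous_on_indicator[OF _ assms] open_Hpl by simp

lemma emeasure_lborel_cbox_Pair:
  assumes "a \<le> b" "c \<le> d"
  shows "emeasure lborel (cbox (a, c) (b :: real, d :: real)) = ennreal ((b - a) * (d - c))"
proof -
  have "emeasure lborel (cbox (a, c) (b, d)) = (\<Prod>x\<in>Basis. ((b, d) - (a, c)) \<bullet> x)"
    by (rule emeasure_lborel_cbox) (use assms in \<open>auto simp: Basis_prod_def\<close>)
  also have "\<dots> = (b - a) * (d - c)"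
    by (simp add: Basis_prod_def prod.union_disjoint algebra_simps)
  finally show ?thesis by (simp add: mult.commute)
qed

lemma norm_add_sq_le:
  fixes F G :: "'b::real_normed_vector"
  assumes l: "0 < l"
  shows "(norm (F + G))\<^sup>2 \<le> (1 + l) * (norm F)\<^sup>2 + (1 + 1 / l) * (norm G)\<^sup>2"
proof -
  have "(norm (F + G))\<^sup>2 \<le> (norm F + norm G)\<^sup>2"
    by (intro power_mono norm_triangle_ineq) auto
  also have "\<dots> = (norm F)\<^sup>2 + 2 * norm F * norm G + (norm G)\<^sup>2"
    by (simp add: power2_eq_square algebra_simps)
  also have "2 * norm F * norm G \<le> l * (norm F)\<^sup>2 + (norm G)\<^sup>2 / l"
  proof -
    have "0 \<le> (l * norm F - norm G)\<^sup>2 / l"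
      using l by simp
    also have "(l * norm F - norm G)\<^sup>2 / l = l * (norm F)\<^sup>2 - 2 * norm F * norm G + (norm G)\<^sup>2 / l"
      using l by (simp add: power2_eq_square field_simps)
    finally show ?thesis by simp
  qed
  finally show ?thesis
    by (simp add: algebra_simps)
qed

lemma le_sqrt_add_sqrt_sq:
  fixes X A B :: real
  assumes A: "0 \<le> A" and B: "0 \<le> B"
    and H: "\<And>l. 0 < l \<Longrightarrow> X \<le> (1 + l) * A + (1 + 1 / l) * B"
  shows "X \<le> (sqrt A + sqrt B)\<^sup>2"
proof (cases "A > 0 \<and> B > 0")
  case True
  define l where "l = sqrt B / sqrt A"
  have l: "l > 0"
    using True by (simp add: l_def)
  have "X \<le> (1 + l) * A + (1 + 1 / l) * B"
    using H[OF l] .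
  also have "\<dots> = (sqrt A + sqrt B)\<^sup>2"
  proof -
    have sA: "sqrt A * sqrt A = A" and sB: "sqrt B * sqrt B = B"
      using A B by simp_all
    have "(1 + l) * A = A + sqrt A * sqrt B"
      using True sA by (simp add: l_def field_simps)
    moreover have "(1 + 1 / l) * B = B + sqrt A * sqrt B"
      using True sB by (simp add: l_def field_simps)
    ultimately show ?thesis
      using sA sB by (simp add: power2_eq_square algebra_simps)
  qed
  finally show ?thesis .
next
  case False
  then consider "A = 0" | "B = 0"
    using A B by linarith
  then show ?thesis
  proof cases
    case 1
    have "X \<le> B"
    proof (rule field_le_epsilon)
      fix e :: real assume e: "0 < e"
      have "X \<le> B + B / ((B + 1) / e)"
        using H[of "(B + 1) / e"] 1 e B by (simp add: algebra_simps)
      also have "B / ((B + 1) / e) \<le> e"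
        using e B by (simp add: field_simps)
      finally show "X \<le> B + e" by simp
    qed
    then show ?thesis
      using 1 B by simp
  next
    case 2
    have "X \<le> A"
    proof (rule field_le_epsilon)
      fix e :: real assume e: "0 < e"
      have "X \<le> A + e / (A + 1) * A"
        using H[of "e / (A + 1)"] 2 e A by (simp add: algebra_simps)
      also have "e / (A + 1) * A \<le> e"
        using e A by (simp add: field_simps)
      finally show "X \<le> A + e" by simp
    qed
    then show ?thesis
      using 2 A by simp
  qed
qed

lemma set_integral_minkowski:
  fixes F G :: "'a \<Rightarrow> 'b::real_normed_vector"
  assumes iF: "set_integrable M A (\<lambda>x. (norm (F x))\<^sup>2)"
    and iG: "set_integrable M A (\<lambda>x. (norm (G x))\<^sup>2)"
    and mFG: "set_borel_measurable M A (\<lambda>x. (norm (F x + G x))\<^sup>2)"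
  shows "set_integrable M A (\<lambda>x. (norm (F x + G x))\<^sup>2)"
    and "sqrt (LINT x:A|M. (norm (F x + G x))\<^sup>2) \<le>
       sqrt (LINT x:A|M. (norm (F x))\<^sup>2) + sqrt (LINT x:A|M. (norm (G x))\<^sup>2)"
proof -
  have "set_integrable M A (\<lambda>x. 2 * (norm (F x))\<^sup>2 + 2 * (norm (G x))\<^sup>2)"
    using iF iG by (intro set_integral_add set_integrable_mult_right)
  then show iFG: "set_integrable M A (\<lambda>x. (norm (F x + G x))\<^sup>2)"
    using norm_add_sq_le[of 1] by (intro set_integrable_bound[OF _ mFG]) (auto intro!: AE_I2)
  have "(LINT x:A|M. (norm (F x + G x))\<^sup>2)
      \<le> (1 + l) * (LINT x:A|M. (norm (F x))\<^sup>2) + (1 + 1 / l) * (LINT x:A|M. (norm (G x))\<^sup>2)"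
    if l: "0 < l" for l
  proof -
    have "(LINT x:A|M. (norm (F x + G x))\<^sup>2)
        \<le> (LINT x:A|M. (1 + l) * (norm (F x))\<^sup>2 + (1 + 1 / l) * (norm (G x))\<^sup>2)"
      using iF iG norm_add_sq_le[OF l]
      by (intro set_integral_mono iFG set_integral_add set_integrable_mult_right) auto
    then show ?thesis
      using iF iG by (simp add: set_integral_add)
  qed
  moreover have nonneg: "0 \<le> (LINT x:A|M. (norm (F x))\<^sup>2)" "0 \<le> (LINT x:A|M. (norm (G x))\<^sup>2)"
    by (simp_all add: set_integral_nonneg)
  ultimately have "(LINT x:A|M. (norm (F x + G x))\<^sup>2)
      \<le> (sqrt (LINT x:A|M. (norm (F x))\<^sup>2) + sqrt (LINT x:A|M. (norm (G x))\<^sup>2))\<^sup>2"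
    by (intro le_sqrt_add_sqrt_sq)
  from real_sqrt_le_mono[OF this] show "sqrt (LINT x:A|M. (norm (F x + G x))\<^sup>2) \<le>
       sqrt (LINT x:A|M. (norm (F x))\<^sup>2) + sqrt (LINT x:A|M. (norm (G x))\<^sup>2)"
    using nonneg by simp
qed

section \<open>Symmetry of mixed partial derivatives\<close>

lemma has_real_derivative_pdx:
  assumes "F differentiable (at (s, c))"
  shows "((\<lambda>t. F (t, c)) has_real_derivative pdx F (s, c)) (at s)"
proof -
  let ?D = "frechet_derivative F (at (s, c))"
  have d: "(F has_derivative ?D) (at (s, c))" using assms frechet_derivative_works by blast
  have p: "((\<lambda>t::real. (t, c)) has_derivative (\<lambda>h. (h, 0))) (at s)"
    by (auto intro!: derivative_eq_intros)
  have "((\<lambda>t. F (t, c)) has_derivative (\<lambda>h. ?D (h, 0))) (at s)"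
    using has_derivative_compose[OF p, of F ?D] d by (simp add: o_def)
  moreover have "?D (h, 0) = pdx F (s, c) * h" for h
    using linear_scale[OF has_derivative_linear[OF d], of h "(1, 0)"] by (simp add: pdx_def)
  ultimately show ?thesis by (simp add: has_field_derivative_def)
qed

lemma has_real_derivative_pdy:
  assumes "F differentiable (at (c, s))"
  shows "((\<lambda>t. F (c, t)) has_real_derivative pdy F (c, s)) (at s)"
proof -
  let ?D = "frechet_derivative F (at (c, s))"
  have d: "(F has_derivative ?D) (at (c, s))" using assms frechet_derivative_works by blast
  have p: "((\<lambda>t::real. (c, t)) has_derivative (\<lambda>h. (0, h))) (at s)"
    by (auto intro!: derivative_eq_intros)
  have "((\<lambda>t. F (c, t)) has_derivative (\<lambda>h. ?D (0, h))) (at s)"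
    using has_derivative_compose[OF p, of F ?D] d by (simp add: o_def)
  moreover have "?D (0, h) = pdy F (c, s) * h" for h
    using linear_scale[OF has_derivative_linear[OF d], of h "(0, 1)"] by (simp add: pdy_def)
  ultimately show ?thesis by (simp add: has_field_derivative_def)
qed

definition twice_differentiable_Hpl :: "(real \<times> real \<Rightarrow> real) \<Rightarrow> bool" where
  "twice_differentiable_Hpl F \<longleftrightarrow>
     (\<forall>p\<in>Hpl. F differentiable (at p) \<and> pdx F differentiable (at p) \<and> pdy F differentiable (at p))"

lemma second_difference_mvt:
  assumes F: "twice_differentiable_Hpl F"
    and p: "(x0, y0) \<in> Hpl" and t: "0 < t"
  shows "\<exists>\<xi> \<eta>. x0 < \<xi> \<and> \<xi> < x0 + t \<and> y0 < \<eta> \<and> \<eta> < y0 + t \<and>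
     F (x0 + t, y0 + t) - F (x0 + t, y0) - F (x0, y0 + t) + F (x0, y0) = t * t * pdy (pdx F) (\<xi>, \<eta>)"
    and "\<exists>\<xi> \<eta>. x0 < \<xi> \<and> \<xi> < x0 + t \<and> y0 < \<eta> \<and> \<eta> < y0 + t \<and>
     F (x0 + t, y0 + t) - F (x0 + t, y0) - F (x0, y0 + t) + F (x0, y0) = t * t * pdx (pdy F) (\<xi>, \<eta>)"
proof -
  note diff = F[unfolded twice_differentiable_Hpl_def]
  have inH: "\<And>u v. x0 \<le> u \<Longrightarrow> u \<le> x0 + t \<Longrightarrow> y0 \<le> v \<Longrightarrow> v \<le> y0 + t \<Longrightarrow> (u, v) \<in> Hpl"
    using p t by (auto simp: Hpl_def)
  obtain \<xi> where \<xi>: "x0 < \<xi>" "\<xi> < x0 + t"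
    "(F (x0 + t, y0 + t) - F (x0 + t, y0)) - (F (x0, y0 + t) - F (x0, y0)) =
      t * (pdx F (\<xi>, y0 + t) - pdx F (\<xi>, y0))"
  proof -
    have "\<And>s. x0 \<le> s \<Longrightarrow> s \<le> x0 + t \<Longrightarrow>
      ((\<lambda>s. F (s, y0 + t) - F (s, y0)) has_real_derivative (pdx F (s, y0 + t) - pdx F (s, y0))) (at s)"
      using diff inH t by (intro DERIV_diff has_real_derivative_pdx) auto
    from MVT2[of x0 "x0 + t", OF _ this] t show ?thesis using that by auto
  qed
  obtain \<eta> where \<eta>: "y0 < \<eta>" "\<eta> < y0 + t"
    "pdx F (\<xi>, y0 + t) - pdx F (\<xi>, y0) = t * pdy (pdx F) (\<xi>, \<eta>)"
  proof -
    have "\<And>s. y0 \<le> s \<Longrightarrow> s \<le> y0 + t \<Longrightarrow>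
      ((\<lambda>s. pdx F (\<xi>, s)) has_real_derivative pdy (pdx F) (\<xi>, s)) (at s)"
      using diff inH \<xi> by (intro has_real_derivative_pdy) auto
    from MVT2[of y0 "y0 + t", OF _ this] t show ?thesis using that by auto
  qed
  show "\<exists>\<xi> \<eta>. x0 < \<xi> \<and> \<xi> < x0 + t \<and> y0 < \<eta> \<and> \<eta> < y0 + t \<and>
     F (x0 + t, y0 + t) - F (x0 + t, y0) - F (x0, y0 + t) + F (x0, y0) = t * t * pdy (pdx F) (\<xi>, \<eta>)"
    using \<xi> \<eta> by (intro exI[of _ \<xi>] exI[of _ \<eta>]) (auto simp: algebra_simps)
  obtain \<eta>' where \<eta>': "y0 < \<eta>'" "\<eta>' < y0 + t"
    "(F (x0 + t, y0 + t) - F (x0, y0 + t)) - (F (x0 + t, y0) - F (x0, y0)) =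
      t * (pdy F (x0 + t, \<eta>') - pdy F (x0, \<eta>'))"
  proof -
    have "\<And>s. y0 \<le> s \<Longrightarrow> s \<le> y0 + t \<Longrightarrow>
      ((\<lambda>s. F (x0 + t, s) - F (x0, s)) has_real_derivative (pdy F (x0 + t, s) - pdy F (x0, s))) (at s)"
      using diff inH t by (intro DERIV_diff has_real_derivative_pdy) auto
    from MVT2[of y0 "y0 + t", OF _ this] t show ?thesis using that by auto
  qed
  obtain \<xi>' where \<xi>': "x0 < \<xi>'" "\<xi>' < x0 + t"
    "pdy F (x0 + t, \<eta>') - pdy F (x0, \<eta>') = t * pdx (pdy F) (\<xi>', \<eta>')"
  proof -
    have "\<And>s. x0 \<le> s \<Longrightarrow> s \<le> x0 + t \<Longrightarrow>
      ((\<lambda>s. pdy F (s, \<eta>')) has_real_derivative pdx (pdy F) (s, \<eta>')) (at s)"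
      using diff inH \<eta>' by (intro has_real_derivative_pdx) auto
    from MVT2[of x0 "x0 + t", OF _ this] t show ?thesis using that by auto
  qed
  show "\<exists>\<xi> \<eta>. x0 < \<xi> \<and> \<xi> < x0 + t \<and> y0 < \<eta> \<and> \<eta> < y0 + t \<and>
     F (x0 + t, y0 + t) - F (x0 + t, y0) - F (x0, y0 + t) + F (x0, y0) = t * t * pdx (pdy F) (\<xi>, \<eta>)"
    using \<xi>' \<eta>' by (intro exI[of _ \<xi>'] exI[of _ \<eta>']) (auto simp: algebra_simps)
qed

lemma pdy_pdx_eq_pdx_pdy:
  assumes F: "twice_differentiable_Hpl F"
    and cont: "continuous_on Hpl (pdy (pdx F))" "continuous_on Hpl (pdx (pdy F))"
    and p: "p \<in> Hpl"
  shows "pdy (pdx F) p = pdx (pdy F) p"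
proof (rule ccontr)
  assume ne: "pdy (pdx F) p \<noteq> pdx (pdy F) p"
  define e where "e = \<bar>pdy (pdx F) p - pdx (pdy F) p\<bar> / 2"
  have e: "e > 0" using ne by (simp add: e_def)
  obtain d1 where d1: "d1 > 0"
    "\<And>q. q \<in> Hpl \<Longrightarrow> dist q p < d1 \<Longrightarrow> dist (pdy (pdx F) q) (pdy (pdx F) p) < e"
    using cont(1) p e unfolding continuous_on_iff by metis
  obtain d2 where d2: "d2 > 0"
    "\<And>q. q \<in> Hpl \<Longrightarrow> dist q p < d2 \<Longrightarrow> dist (pdx (pdy F) q) (pdx (pdy F) p) < e"
    using cont(2) p e unfolding continuous_on_iff by metis
  obtain x0 y0 where xy: "p = (x0, y0)" by (cases p)
  have y0: "y0 > 0" using p xy by (simp add: Hpl_def)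
  define t where "t = min (d1 / 2) (d2 / 2)"
  have t: "0 < t" "2 * t \<le> d1" "2 * t \<le> d2"
    using d1 d2 by (auto simp: t_def)
  have near: "(u, v) \<in> Hpl \<and> dist (u, v) p < 2 * t"
    if "x0 < u" "u < x0 + t" "y0 < v" "v < y0 + t" for u v
    using that y0 sqrt_sum_squares_le_sum_abs[of "u - x0" "v - y0"]
    by (auto simp: Hpl_def xy dist_Pair_Pair dist_real_def)
  obtain \<xi> \<eta> where A: "x0 < \<xi>" "\<xi> < x0 + t" "y0 < \<eta>" "\<eta> < y0 + t"
    "F (x0 + t, y0 + t) - F (x0 + t, y0) - F (x0, y0 + t) + F (x0, y0) = t * t * pdy (pdx F) (\<xi>, \<eta>)"
    using second_difference_mvt(1)[OF F p[unfolded xy] t(1)] by blast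
  obtain \<xi>' \<eta>' where B: "x0 < \<xi>'" "\<xi>' < x0 + t" "y0 < \<eta>'" "\<eta>' < y0 + t"
    "F (x0 + t, y0 + t) - F (x0 + t, y0) - F (x0, y0 + t) + F (x0, y0) = t * t * pdx (pdy F) (\<xi>', \<eta>')"
    using second_difference_mvt(2)[OF F p[unfolded xy] t(1)] by blast
  have "pdy (pdx F) (\<xi>, \<eta>) = pdx (pdy F) (\<xi>', \<eta>')"
    using A(5) B(5) t(1) by simp
  moreover have "dist (pdy (pdx F) (\<xi>, \<eta>)) (pdy (pdx F) p) < e"
    using near[OF A(1-4)] d1(2) t(2) by simp
  moreover have "dist (pdx (pdy F) (\<xi>', \<eta>')) (pdx (pdy F) p) < e"
    using near[OF B(1-4)] d2(2) t(3) by simp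
  ultimately have "\<bar>pdy (pdx F) p - pdx (pdy F) p\<bar> < 2 * e"
    by (simp add: dist_real_def)
  then show False by (simp add: e_def)
qed

section \<open>Harmonic functions as holomorphic functions\<close>

lemma linear_pair_eq:
  fixes L :: "real \<times> real \<Rightarrow> real"
  assumes "linear L"
  shows "L (u, v) = u * L (1, 0) + v * L (0, 1)"
  using linear_add[OF assms, of "(u, 0)" "(0, v)"]
    linear_scale[OF assms, of u "(1, 0)"] linear_scale[OF assms, of v "(0, 1)"]
  by simp

lemma Cauchy_Riemann_field_differentiable:
  fixes U V :: "real \<times> real \<Rightarrow> real"
  assumes "U differentiable (at p)" "V differentiable (at p)"
    and CR: "pdx U p = - pdy V p" "pdy U p = pdx V p"
  shows "(\<lambda>z. Complex (U (coords z)) (- V (coords z))) field_differentiable (at (cplx p))"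
proof -
  define DU where "DU = frechet_derivative U (at p)"
  define DV where "DV = frechet_derivative V (at p)"
  have dU: "(U has_derivative DU) (at p)" and dV: "(V has_derivative DV) (at p)"
    using assms(1,2) frechet_derivative_works unfolding DU_def DV_def by blast+
  have dcoords: "(coords has_derivative coords) (at (cplx p))"
    using bounded_linear_coords bounded_linear_imp_has_derivative by blast
  have "((\<lambda>z. of_real (U (coords z)) + \<i> * of_real (- V (coords z))) has_derivative
      (\<lambda>w. of_real (DU (coords w)) + \<i> * of_real (- DV (coords w)))) (at (cplx p))"
    using has_derivative_compose[OF dcoords, of U DU] has_derivative_compose[OF dcoords, of V DV] dU dV
    by (auto simp: o_def intro!: derivative_intros)
  moreover have "(\<lambda>w. of_real (DU (coords w)) + \<i> * of_real (- DV (coords w))) =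
      (*) (Complex (DU (1, 0)) (- DV (1, 0)))"
  proof
    fix w
    have "DU (0, 1) = DV (1, 0)" "DV (0, 1) = - DU (1, 0)"
      using CR by (auto simp: DU_def DV_def pdx_def pdy_def)
    then show "of_real (DU (coords w)) + \<i> * of_real (- DV (coords w)) = Complex (DU (1, 0)) (- DV (1, 0)) * w"
      using linear_pair_eq[OF has_derivative_linear[OF dU], of "Re w" "Im w"]
        linear_pair_eq[OF has_derivative_linear[OF dV], of "Re w" "Im w"]
      by (simp add: coords_def complex_eq_iff algebra_simps)
  qed
  moreover have "(\<lambda>z. Complex (U (coords z)) (- V (coords z))) =
      (\<lambda>z. of_real (U (coords z)) + \<i> * of_real (- V (coords z)))"
    by (simp add: fun_eq_iff complex_eq_iff)
  ultimately show ?thesis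
    unfolding field_differentiable_def has_field_derivative_def by auto
qed

lemma harmonic_imp_holomorphic:
  assumes "a \<noteq> 0" and F: "harmonic_hyp a F"
  obtains h where "h holomorphic_on upper_half" "dform F = form_of h"
proof
  define h where "h z = Complex (pdx F (coords z)) (- pdy F (coords z))" for z
  have tw: "twice_differentiable_Hpl F"
    using F by (simp add: harmonic_hyp_def twice_differentiable_Hpl_def)
  have "h field_differentiable (at (cplx p))" if p: "p \<in> Hpl" for p
  proof -
    have "pdx (pdx F) p + pdy (pdy F) p = 0"
      using F p \<open>a \<noteq> 0\<close> by (cases p) (auto simp: harmonic_hyp_def lap_hyp_def Hpl_def)
    moreover have "pdy (pdx F) p = pdx (pdy F) p"
      using F p by (intro pdy_pdx_eq_pdx_pdy tw) (auto simp: harmonic_hyp_def)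
    ultimately show ?thesis
      unfolding h_def using tw p
      by (intro Cauchy_Riemann_field_differentiable) (auto simp: twice_differentiable_Hpl_def)
  qed
  then have "h field_differentiable (at z)" if "z \<in> upper_half" for z
    using that by (metis cplx_coords cplx_in_upper_half_iff)
  then show "h holomorphic_on upper_half"
    using open_upper_half holomorphic_on_open field_differentiable_def by blast
  show "dform F = form_of h"
    by (auto simp: fun_eq_iff form_of_def dform_def h_def)
qed

lemma holomorphic_imp_harmonic:
  assumes h: "h holomorphic_on upper_half"
  obtains F where "harmonic_hyp a F" "dform F = form_of h"
proof -
  obtain P where P: "\<And>z. z \<in> upper_half \<Longrightarrow> (P has_field_derivative h z) (at z within upper_half)"
    using holomorphic_convex_primitive'[of upper_half h] h open_upper_half convex_halfspace_Im_gt[of 0]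
    by (auto simp: upper_half_def)
  have P': "\<And>z. z \<in> upper_half \<Longrightarrow> (P has_field_derivative h z) (at z)"
    using P open_upper_half at_within_open by metis
  have Phol: "P holomorphic_on upper_half"
    using P' open_upper_half holomorphic_on_open by blast
  have ih: "(\<lambda>z. \<i> * h z) holomorphic_on upper_half"
    using h by (intro holomorphic_intros)
  define F where "F q = Re (P (cplx q))" for q
  have Fx: "pdx F p = Re (h (cplx p))" and Fy: "pdy F p = Re (\<i> * h (cplx p))"
    and Fd: "F differentiable (at p)" if "p \<in> Hpl" for p
  proof -
    have "deriv P (cplx p) = h (cplx p)"
      using P'[of "cplx p"] that by (simp add: DERIV_imp_deriv)
    then show "pdx F p = Re (h (cplx p))" "pdy F p = Re (\<i> * h (cplx p))" "F differentiable (at p)"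
      using pd_Re_holomorphic[OF Phol that, of F] by (auto simp: F_def)
  qed
  have Fxx: "pdx (pdx F) p = Re (deriv h (cplx p))" and Fxy: "pdy (pdx F) p = - Im (deriv h (cplx p))"
    and Fxd: "pdx F differentiable (at p)" if "p \<in> Hpl" for p
    using pd_Re_holomorphic[OF h that] Fx by auto
  have Fyx: "pdx (pdy F) p = - Im (deriv h (cplx p))" and Fyy: "pdy (pdy F) p = - Re (deriv h (cplx p))"
    and Fyd: "pdy F differentiable (at p)" if "p \<in> Hpl" for p
    using pd_Re_holomorphic[OF ih that] Fy deriv_times_i[OF h, of "cplx p"] that by auto
  have cont: "continuous_on Hpl (\<lambda>p. Re (deriv h (cplx p)))" "continuous_on Hpl (\<lambda>p. - Im (deriv h (cplx p)))"
    "continuous_on Hpl (\<lambda>p. - Re (deriv h (cplx p)))"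
    using holomorphic_on_upper_half_continuous(2)[OF h] by (auto intro!: continuous_intros)
  have "continuous_on Hpl (pdx (pdx F))" by (rule continuous_on_eq[OF cont(1)]) (simp add: Fxx)
  moreover have "continuous_on Hpl (pdy (pdx F))" by (rule continuous_on_eq[OF cont(2)]) (simp add: Fxy)
  moreover have "continuous_on Hpl (pdx (pdy F))" by (rule continuous_on_eq[OF cont(2)]) (simp add: Fyx)
  moreover have "continuous_on Hpl (pdy (pdy F))" by (rule continuous_on_eq[OF cont(3)]) (simp add: Fyy)
  ultimately have "harmonic_hyp a F"
    unfolding harmonic_hyp_def lap_hyp_def using Fd Fxd Fyd Fxx Fyy by auto
  moreover have "dform F = form_of h"
    using Fx Fy by (auto simp: fun_eq_iff dform_def form_of_def)
  ultimately show ?thesis using that by blast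
qed

lemma form_sq_form_of:
  assumes "a \<noteq> 0" "p \<in> Hpl"
  shows "form_sq a (form_of h) p * vol_hyp a p = (cmod (h (cplx p)))\<^sup>2"
  using assms by (auto simp: form_of_def form_sq_def vol_hyp_def Hpl_def cmod_power2 field_simps)

lemma Def_sq_form_of:
  assumes h: "h holomorphic_on upper_half" and p: "p \<in> Hpl"
  shows "Def_sq a (form_of h) p * vol_hyp a p =
     2 * a\<^sup>2 * (cmod (of_real (snd p) * deriv h (cplx p) - \<i> * h (cplx p)))\<^sup>2"
proof -
  have ih: "(\<lambda>z. \<i> * h z) holomorphic_on upper_half"
    using h by (intro holomorphic_intros)
  define y where "y = snd p"
  define A1 where "A1 = Re (deriv h (cplx p))"
  define A2 where "A2 = Im (deriv h (cplx p))"
  define B1 where "B1 = Re (h (cplx p))"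
  define B2 where "B2 = Im (h (cplx p))"
  have y: "y > 0" using p by (simp add: y_def Hpl_def)
  have "Def11 (form_of h) p = A1 + B2 / y" "Def22 (form_of h) p = - A1 - B2 / y"
    "Def12 (form_of h) p = - A2 + B1 / y"
    using pd_Re_holomorphic[OF h p, of "\<lambda>q. fst (form_of h q)"]
      pd_Re_holomorphic[OF ih p, of "\<lambda>q. snd (form_of h q)"] deriv_times_i[OF h, of "cplx p"] p
    by (auto simp: Def11_def Def22_def Def12_def form_of_def A1_def A2_def B1_def B2_def y_def)
  moreover have "(cmod (of_real y * deriv h (cplx p) - \<i> * h (cplx p)))\<^sup>2
      = (y * A1 + B2)\<^sup>2 + (y * A2 - B1)\<^sup>2"
    by (simp add: cmod_power2 A1_def A2_def B1_def B2_def)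
  moreover have "(a * y) ^ 4 * ((A1 + B2 / y)\<^sup>2 + 2 * (- A2 + B1 / y)\<^sup>2 + (- A1 - B2 / y)\<^sup>2) * (1 / (a\<^sup>2 * y\<^sup>2))
       = 2 * a\<^sup>2 * ((y * A1 + B2)\<^sup>2 + (y * A2 - B1)\<^sup>2)"
  proof (cases "a = 0")
    case False
    then show ?thesis
      using y by (simp add: field_simps power2_eq_square) (simp add: algebra_simps power_def)
  qed simp
  ultimately show ?thesis
    unfolding Def_sq_def vol_hyp_def y_def[symmetric] by simp
qed

definition in_bergman :: "(complex \<Rightarrow> complex) \<Rightarrow> bool" where
  "in_bergman h \<longleftrightarrow> h holomorphic_on upper_half \<and> set_integrable lborel Hpl (\<lambda>p. (cmod (h (cplx p)))\<^sup>2)"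

lemma in_L2_form_of:
  assumes "a \<noteq> 0"
  shows "in_L2 a (form_of h) \<longleftrightarrow> set_integrable lborel Hpl (\<lambda>p. (cmod (h (cplx p)))\<^sup>2)"
  unfolding in_L2_def using form_sq_form_of[OF assms] by (intro set_integrable_cong) auto

lemma FF_eq_form_of_bergman:
  assumes "a \<noteq> 0"
  shows "FF a = form_of ` Collect in_bergman"
proof
  show "FF a \<subseteq> form_of ` Collect in_bergman"
  proof
    fix u assume "u \<in> FF a"
    then obtain F where F: "u = dform F" "harmonic_hyp a F" "in_L2 a (dform F)"
      by (auto simp: FF_def)
    obtain h where "h holomorphic_on upper_half" "dform F = form_of h"
      using harmonic_imp_holomorphic[OF assms F(2)] .
    then show "u \<in> form_of ` Collect in_bergman"
      using F in_L2_form_of[OF assms] by (auto simp: in_bergman_def)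
  qed
  show "form_of ` Collect in_bergman \<subseteq> FF a"
  proof
    fix u assume "u \<in> form_of ` Collect in_bergman"
    then obtain h where h: "in_bergman h" "u = form_of h" by blast
    obtain F where "harmonic_hyp a F" "dform F = form_of h"
      using holomorphic_imp_harmonic h(1) by (auto simp: in_bergman_def)
    then show "u \<in> FF a"
      using h in_L2_form_of[OF assms] unfolding FF_def in_bergman_def by (metis (mono_tags) mem_Collect_eq)
  qed
qed

section \<open>A mean value inequality on squares\<close>

definition square :: "real \<Rightarrow> real \<Rightarrow> real \<Rightarrow> (real \<times> real) set" where
  "square x y \<rho> = cbox (x - \<rho>, y - \<rho>) (x + \<rho>, y + \<rho>)"

definition csquare :: "real \<Rightarrow> real \<Rightarrow> real \<Rightarrow> complex set" where
  "csquare x y \<rho> = cbox (Complex (x - \<rho>) (y - \<rho>)) (Complex (x + \<rho>) (y + \<rho>))"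

lemma mem_square: "(u, v) \<in> square x y \<rho> \<longleftrightarrow> \<bar>u - x\<bar> \<le> \<rho> \<and> \<bar>v - y\<bar> \<le> \<rho>"
  by (auto simp: square_def cbox_Pair_eq)

lemma mem_csquare: "w \<in> csquare x y \<rho> \<longleftrightarrow> \<bar>Re w - x\<bar> \<le> \<rho> \<and> \<bar>Im w - y\<bar> \<le> \<rho>"
  by (auto simp: csquare_def in_cbox_complex_iff)

lemma square_subset_Hpl: "\<rho> < y \<Longrightarrow> square x y \<rho> \<subseteq> Hpl"
  by (auto simp: square_def cbox_Pair_eq Hpl_def)

lemma csquare_subset_upper_half: "\<rho> < y \<Longrightarrow> csquare x y \<rho> \<subseteq> upper_half"
  by (auto simp: upper_half_def mem_csquare)

lemma cplx_image_square: "cplx ` square x y \<rho> = csquare x y \<rho>"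
proof
  show "cplx ` square x y \<rho> \<subseteq> csquare x y \<rho>"
    by (auto simp: mem_csquare square_def cbox_Pair_eq)
  show "csquare x y \<rho> \<subseteq> cplx ` square x y \<rho>"
  proof
    fix w assume "w \<in> csquare x y \<rho>"
    then have "coords w \<in> square x y \<rho>"
      by (simp add: coords_def mem_square mem_csquare)
    then show "w \<in> cplx ` square x y \<rho>"
      by (metis cplx_coords image_eqI)
  qed
qed

lemma contour_integral_linepath_same_Im:
  assumes "a < b"
  shows "contour_integral (linepath (Complex a c) (Complex b c)) f = integral {a..b} (\<lambda>x. f (Complex x c))"
proof -
  define z z' where "z = Complex a c" and "z' = Complex b c"
  have "contour_integral (linepath z z') f = (z' - z) * integral {0..1} (\<lambda>x. f (linepath z z' x))"
    by (simp add: contour_integral_integral)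
  also have "z' - z = of_real (b - a)"
    by (simp add: z_def z'_def Complex_eq algebra_simps)
  also have "integral {0..1} (\<lambda>x. f (linepath z z' x)) = integral {0..1} (\<lambda>x. f (Complex (linepath a b x) c))"
    by (simp add: linepath_def Complex_eq scaleR_conv_of_real algebra_simps z_def z'_def)
  also have "\<dots> = integral {0..(b - a) / (b - a)} (\<lambda>x. f (Complex (a + (b - a) * x) c))"
    using \<open>a < b\<close> by (simp add: algebra_simps linepath_def)
  also have "{0..(b - a) / (b - a)} = (\<lambda>x. x / (b - a)) ` {0..b - a}"
    using \<open>a < b\<close> by simp
  also have "integral \<dots> (\<lambda>x. f (Complex (a + (b - a) * x) c)) =
             integral {a-a..b-a} (\<lambda>x. f (Complex (x + a) c)) / of_real (b - a)"
    using \<open>a < b\<close> by (subst integral_stretch_real) (auto simp: scaleR_conv_of_real add_ac)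
  also have "\<dots> = integral {a..b} (\<lambda>x. f (Complex x c)) / of_real (b - a)"
    by (subst integral_shift_real_ivl) (rule refl)
  finally show ?thesis
    using \<open>a < b\<close> by (simp add: z_def z'_def)
qed

lemma integral_shrink_le:
  fixes \<phi> :: "real \<Rightarrow> real"
  assumes "c \<le> a" "a \<le> b" "b \<le> d" "continuous_on {c..d} \<phi>" "\<And>u. u \<in> {c..d} \<Longrightarrow> 0 \<le> \<phi> u"
    "0 < r" "r \<le> s"
  shows "integral {a..b} \<phi> / s \<le> integral {c..d} \<phi> / r"
proof -
  have ab: "{a..b} \<subseteq> {c..d}" using assms by auto
  have "integral {a..b} \<phi> \<le> integral {c..d} \<phi>"
    using assms(5) ab
    by (intro integral_subset_le integrable_continuous_interval continuous_on_subset[OF assms(4)]) auto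
  moreover have "0 \<le> integral {a..b} \<phi>"
    using assms(5) ab
    by (intro integral_nonneg integrable_continuous_interval continuous_on_subset[OF assms(4)]) auto
  ultimately show ?thesis
    using assms(6,7) by (meson frac_le order.trans order_refl)
qed

lemma norm_contour_integral_horizontal_side_le:
  fixes f :: "complex \<Rightarrow> complex"
  assumes f: "continuous_on (csquare x y (2 * r)) f" and s: "0 < r" "r \<le> s" "s \<le> 2 * r"
    and c: "\<bar>c - y\<bar> = s"
  defines "g \<equiv> \<lambda>w. f w / (w - Complex x y)"
  shows "cmod (contour_integral (linepath (Complex (x - s) c) (Complex (x + s) c)) g)
           \<le> integral {x - 2*r..x + 2*r} (\<lambda>u. cmod (f (Complex u c))) / r"
    and "cmod (contour_integral (linepath (Complex (x + s) c) (Complex (x - s) c)) g)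
           \<le> integral {x - 2*r..x + 2*r} (\<lambda>u. cmod (f (Complex u c))) / r"
proof -
  have line: "continuous_on {x - 2*r..x + 2*r} (\<lambda>u. f (Complex u c))"
    by (rule continuous_on_compose2[OF f]) (use s c in \<open>auto simp: Complex_eq mem_csquare intro!: continuous_intros\<close>)
  have seg: "closed_segment (Complex (x - s) c) (Complex (x + s) c) \<subseteq> csquare x y (2 * r) - {Complex x y}"
    using s c by (auto simp: closed_segment_same_Im closed_segment_eq_real_ivl mem_csquare)
  have cont: "continuous_on (closed_segment (Complex (x - s) c) (Complex (x + s) c)) g"
    unfolding g_def using seg by (intro continuous_intros continuous_on_subset[OF f]) auto
  have bound: "cmod (g (Complex u c)) \<le> cmod (f (Complex u c)) / s" for u
  proof -
    have "s \<le> cmod (Complex u c - Complex x y)"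
      using abs_Im_le_cmod[of "Complex u c - Complex x y"] c by simp
    then show ?thesis
      unfolding g_def norm_divide using s by (intro divide_left_mono) (auto intro!: mult_pos_pos)
  qed
  have gline: "continuous_on {x - s..x + s} (\<lambda>u. g (Complex u c))"
    by (rule continuous_on_compose2[OF cont])
      (use s in \<open>auto simp: closed_segment_same_Im closed_segment_eq_real_ivl Complex_eq intro!: continuous_intros\<close>)
  have "contour_integral (linepath (Complex (x - s) c) (Complex (x + s) c)) g
      = integral {x - s..x + s} (\<lambda>u. g (Complex u c))"
    using s by (intro contour_integral_linepath_same_Im) auto
  also have "cmod \<dots> \<le> integral {x - s..x + s} (\<lambda>u. cmod (f (Complex u c)) / s)"
    using s by (intro integral_norm_bound_integral integrable_continuous_interval gline bound
        continuous_intros continuous_on_subset[OF line]) auto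
  finally have "cmod (contour_integral (linepath (Complex (x - s) c) (Complex (x + s) c)) g)
      \<le> integral {x - s..x + s} (\<lambda>u. cmod (f (Complex u c))) / s"
    by simp
  also have "\<dots> \<le> integral {x - 2*r..x + 2*r} (\<lambda>u. cmod (f (Complex u c))) / r"
    using s by (intro integral_shrink_le continuous_on_norm line) auto
  finally show "cmod (contour_integral (linepath (Complex (x - s) c) (Complex (x + s) c)) g)
           \<le> integral {x - 2*r..x + 2*r} (\<lambda>u. cmod (f (Complex u c))) / r" .
  then show "cmod (contour_integral (linepath (Complex (x + s) c) (Complex (x - s) c)) g)
           \<le> integral {x - 2*r..x + 2*r} (\<lambda>u. cmod (f (Complex u c))) / r"
    using contour_integral_reverse_linepath[OF cont] by simp
qed

lemma norm_contour_integral_vertical_side_le: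
  fixes f :: "complex \<Rightarrow> complex"
  assumes f: "continuous_on (csquare x y (2 * r)) f" and s: "0 < r" "r \<le> s" "s \<le> 2 * r"
    and c: "\<bar>c - x\<bar> = s"
  defines "g \<equiv> \<lambda>w. f w / (w - Complex x y)"
  shows "cmod (contour_integral (linepath (Complex c (y - s)) (Complex c (y + s))) g)
           \<le> integral {y - 2*r..y + 2*r} (\<lambda>v. cmod (f (Complex c v))) / r"
    and "cmod (contour_integral (linepath (Complex c (y + s)) (Complex c (y - s))) g)
           \<le> integral {y - 2*r..y + 2*r} (\<lambda>v. cmod (f (Complex c v))) / r"
proof -
  have line: "continuous_on {y - 2*r..y + 2*r} (\<lambda>v. f (Complex c v))"
    by (rule continuous_on_compose2[OF f]) (use s c in \<open>auto simp: Complex_eq mem_csquare intro!: continuous_intros\<close>)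
  have seg: "closed_segment (Complex c (y - s)) (Complex c (y + s)) \<subseteq> csquare x y (2 * r) - {Complex x y}"
    using s c by (auto simp: closed_segment_same_Re closed_segment_eq_real_ivl mem_csquare)
  have cont: "continuous_on (closed_segment (Complex c (y - s)) (Complex c (y + s))) g"
    unfolding g_def using seg by (intro continuous_intros continuous_on_subset[OF f]) auto
  have bound: "cmod (g (Complex c v)) \<le> cmod (f (Complex c v)) / s" for v
  proof -
    have "s \<le> cmod (Complex c v - Complex x y)"
      using abs_Re_le_cmod[of "Complex c v - Complex x y"] c by simp
    then show ?thesis
      unfolding g_def norm_divide using s by (intro divide_left_mono) (auto intro!: mult_pos_pos)
  qed
  have gline: "continuous_on {y - s..y + s} (\<lambda>v. g (Complex c v))"
    by (rule continuous_on_compose2[OF cont])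
      (use s in \<open>auto simp: closed_segment_same_Re closed_segment_eq_real_ivl Complex_eq intro!: continuous_intros\<close>)
  have "contour_integral (linepath (Complex c (y - s)) (Complex c (y + s))) g
      = \<i> * integral {y - s..y + s} (\<lambda>v. g (Complex c v))"
    using s by (intro contour_integral_linepath_same_Re) auto
  also have "cmod \<dots> \<le> integral {y - s..y + s} (\<lambda>v. cmod (f (Complex c v)) / s)"
    unfolding norm_mult norm_ii mult_1 using s
    by (intro integral_norm_bound_integral integrable_continuous_interval gline bound
        continuous_intros continuous_on_subset[OF line]) auto
  finally have "cmod (contour_integral (linepath (Complex c (y - s)) (Complex c (y + s))) g)
      \<le> integral {y - s..y + s} (\<lambda>v. cmod (f (Complex c v))) / s"
    by simp
  also have "\<dots> \<le> integral {y - 2*r..y + 2*r} (\<lambda>v. cmod (f (Complex c v))) / r"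
    using s by (intro integral_shrink_le continuous_on_norm line) auto
  finally show "cmod (contour_integral (linepath (Complex c (y - s)) (Complex c (y + s))) g)
           \<le> integral {y - 2*r..y + 2*r} (\<lambda>v. cmod (f (Complex c v))) / r" .
  then show "cmod (contour_integral (linepath (Complex c (y + s)) (Complex c (y - s))) g)
           \<le> integral {y - 2*r..y + 2*r} (\<lambda>v. cmod (f (Complex c v))) / r"
    using contour_integral_reverse_linepath[OF cont] by simp
qed

lemma Cauchy_integral_formula_square:
  fixes f :: "complex \<Rightarrow> complex"
  assumes hol: "f holomorphic_on csquare x y \<rho>" and s: "0 < s" "s \<le> \<rho>"
  defines "g \<equiv> \<lambda>w. f w / (w - Complex x y)"
  shows "2 * pi * \<i> * f (Complex x y) =
      contour_integral (linepath (Complex (x - s) (y - s)) (Complex (x + s) (y - s))) g +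
      contour_integral (linepath (Complex (x + s) (y - s)) (Complex (x + s) (y + s))) g +
      contour_integral (linepath (Complex (x + s) (y + s)) (Complex (x - s) (y + s))) g +
      contour_integral (linepath (Complex (x - s) (y + s)) (Complex (x - s) (y - s))) g"
proof -
  define z where "z = Complex x y"
  define a1 a2 a3 a4 where "a1 = Complex (x - s) (y - s)" "a2 = Complex (x + s) (y - s)"
    "a3 = Complex (x + s) (y + s)" "a4 = Complex (x - s) (y + s)"
  have f: "continuous_on (csquare x y \<rho>) f"
    using hol holomorphic_on_imp_continuous_on by blast
  have zb: "z \<in> box a1 a3"
    using s by (simp add: in_box_complex_iff z_def a1_a2_a3_a4_def)
  have path_image: "path_image (rectpath a1 a3) \<subseteq> csquare x y \<rho> - {z}"
    using path_image_rectpath_cbox_minus_box[of a1 a3] zb s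
    by (auto simp: a1_a2_a3_a4_def mem_csquare in_cbox_complex_iff in_box_complex_iff)
  have "z \<in> interior (csquare x y \<rho>)"
    using s by (simp add: csquare_def z_def in_box_complex_iff)
  then have "contour_integral (rectpath a1 a3) g = 2 * pi * \<i> * f z"
    using Cauchy_integral_formula_convex_simple[of "csquare x y \<rho>" f z "rectpath a1 a3"]
      hol path_image winding_number_rectpath[OF zb] contour_integral_unique
    by (auto simp: g_def z_def csquare_def)
  moreover have rp: "rectpath a1 a3 = linepath a1 a2 +++ linepath a2 a3 +++ linepath a3 a4 +++ linepath a4 a1"
    by (simp add: rectpath_def Let_def a1_a2_a3_a4_def)
  moreover have "g contour_integrable_on linepath a1 a2" "g contour_integrable_on linepath a2 a3"
    "g contour_integrable_on linepath a3 a4" "g contour_integrable_on linepath a4 a1"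
    using path_image unfolding rp g_def z_def
    by (auto simp: path_image_join intro!: contour_integrable_continuous_linepath
        continuous_intros continuous_on_subset[OF f])
  ultimately show ?thesis
    by (simp add: contour_integrable_joinI add.assoc z_def a1_a2_a3_a4_def)
qed

lemma Cauchy_square_estimate:
  fixes f :: "complex \<Rightarrow> complex"
  assumes hol: "f holomorphic_on csquare x y (2 * r)" and s: "0 < r" "r \<le> s" "s \<le> 2 * r"
  shows "2 * pi * cmod (f (Complex x y)) \<le>
    (integral {x - 2*r..x + 2*r} (\<lambda>u. cmod (f (Complex u (y - s)))) +
     integral {x - 2*r..x + 2*r} (\<lambda>u. cmod (f (Complex u (y + s)))) +
     integral {y - 2*r..y + 2*r} (\<lambda>v. cmod (f (Complex (x + s) v))) +
     integral {y - 2*r..y + 2*r} (\<lambda>v. cmod (f (Complex (x - s) v)))) / r"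
proof -
  define g where "g = (\<lambda>w. f w / (w - Complex x y))"
  have f: "continuous_on (csquare x y (2 * r)) f"
    using hol holomorphic_on_imp_continuous_on by blast
  have eq: "2 * pi * \<i> * f (Complex x y) =
      contour_integral (linepath (Complex (x - s) (y - s)) (Complex (x + s) (y - s))) g +
      contour_integral (linepath (Complex (x + s) (y - s)) (Complex (x + s) (y + s))) g +
      contour_integral (linepath (Complex (x + s) (y + s)) (Complex (x - s) (y + s))) g +
      contour_integral (linepath (Complex (x - s) (y + s)) (Complex (x - s) (y - s))) g"
    unfolding g_def using s by (intro Cauchy_integral_formula_square[OF hol]) auto
  have "2 * pi * cmod (f (Complex x y)) = cmod (2 * pi * \<i> * f (Complex x y))"
    by (simp add: norm_mult)
  also have "\<dots> \<le> cmod (contour_integral (linepath (Complex (x - s) (y - s)) (Complex (x + s) (y - s))) g)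
      + cmod (contour_integral (linepath (Complex (x + s) (y - s)) (Complex (x + s) (y + s))) g)
      + cmod (contour_integral (linepath (Complex (x + s) (y + s)) (Complex (x - s) (y + s))) g)
      + cmod (contour_integral (linepath (Complex (x - s) (y + s)) (Complex (x - s) (y - s))) g)"
    unfolding eq by (meson add_mono norm_triangle_ineq order_refl order_trans)
  finally show ?thesis
    using norm_contour_integral_horizontal_side_le(1)[OF f s, of "y - s"]
      norm_contour_integral_horizontal_side_le(2)[OF f s, of "y + s"]
      norm_contour_integral_vertical_side_le(1)[OF f s, of "x + s"]
      norm_contour_integral_vertical_side_le(2)[OF f s, of "x - s"] s
    unfolding add_divide_distrib g_def by simp
qed

lemma integral_reflect_shift_real:
  fixes \<phi> :: "real \<Rightarrow> real"
  shows "integral {r..2*r} (\<lambda>s. \<phi> (y - s)) = integral {y - 2*r..y - r} \<phi>"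
    and "integral {r..2*r} (\<lambda>s. \<phi> (y + s)) = integral {y + r..y + 2*r} \<phi>"
proof -
  have "integral {r..2*r} (\<lambda>s. \<phi> (y - s)) = integral {-2*r..-r} (\<lambda>t. \<phi> (t + y))"
    using Henstock_Kurzweil_Integration.integral_reflect_real[of "-r" "-(2*r)" "\<lambda>t. \<phi> (t + y)"]
    by (simp add: algebra_simps)
  also have "\<dots> = integral {(y - 2*r) - y..(y - r) - y} (\<lambda>t. \<phi> (t + y))" by simp
  also have "\<dots> = integral {y - 2*r..y - r} \<phi>" by (rule integral_shift_real_ivl)
  finally show "integral {r..2*r} (\<lambda>s. \<phi> (y - s)) = integral {y - 2*r..y - r} \<phi>" .
  have "integral {r..2*r} (\<lambda>s. \<phi> (y + s)) = integral {(y + r) - y..(y + 2*r) - y} (\<lambda>t. \<phi> (t + y))"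
    by (simp add: algebra_simps)
  also have "\<dots> = integral {y + r..y + 2*r} \<phi>" by (rule integral_shift_real_ivl)
  finally show "integral {r..2*r} (\<lambda>s. \<phi> (y + s)) = integral {y + r..y + 2*r} \<phi>" .
qed

lemma integral_cbox_Pair_iterated:
  fixes F :: "real \<times> real \<Rightarrow> real"
  assumes "continuous_on (cbox (a, c) (b, d)) F"
  shows "integral {a..b} (\<lambda>u. integral {c..d} (\<lambda>v. F (u, v))) = integral (cbox (a, c) (b, d)) F"
    "integral {c..d} (\<lambda>v. integral {a..b} (\<lambda>u. F (u, v))) = integral (cbox (a, c) (b, d)) F"
proof -
  show 1: "integral {a..b} (\<lambda>u. integral {c..d} (\<lambda>v. F (u, v))) = integral (cbox (a, c) (b, d)) F"
    using integral_prod_continuous[OF assms] by simp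
  have "continuous_on (cbox (a, c) (b, d)) (\<lambda>(u, v). F (u, v))" using assms by simp
  from integral_swap_continuous[of a c b d "\<lambda>u v. F (u, v)", OF this]
  show "integral {c..d} (\<lambda>v. integral {a..b} (\<lambda>u. F (u, v))) = integral (cbox (a, c) (b, d)) F"
    using 1 by simp
qed

lemma integral_subrectangle_le:
  fixes G :: "real \<times> real \<Rightarrow> real"
  assumes "continuous_on (cbox a b) G" "\<And>p. p \<in> cbox a b \<Longrightarrow> 0 \<le> G p" "cbox c d \<subseteq> cbox a b"
  shows "integral (cbox c d) G \<le> integral (cbox a b) G"
  using assms continuous_on_subset[OF assms(1,3)]
  by (intro integral_subset_le integrable_continuous) auto

text \<open>Integrating over \<open>s \<in> [r, 2r]\<close> the line integrals of \<open>G\<close> along the four lines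
  at distance \<open>s\<close> from the centre sweeps out four rectangles covering the square twice.\<close>
lemma integral_square_frames_le:
  fixes G :: "real \<times> real \<Rightarrow> real"
  assumes G: "continuous_on (square x y (2 * r)) G" "\<And>p. p \<in> square x y (2 * r) \<Longrightarrow> 0 \<le> G p"
    and r: "0 < r"
  defines "H \<equiv> \<lambda>v. integral {x - 2*r..x + 2*r} (\<lambda>u. G (u, v))"
    and "V \<equiv> \<lambda>u. integral {y - 2*r..y + 2*r} (\<lambda>v. G (u, v))"
  shows "(\<lambda>s. H (y - s) + H (y + s) + V (x + s) + V (x - s)) integrable_on {r..2*r}"
    and "integral {r..2*r} (\<lambda>s. H (y - s) + H (y + s) + V (x + s) + V (x - s))
           \<le> 4 * integral (square x y (2 * r)) G"
proof -
  define Q where "Q = square x y (2 * r)"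
  have GQ: "continuous_on (cbox (u, v) (u', v')) G" if "cbox (u, v) (u', v') \<subseteq> Q" for u v u' v'
    using continuous_on_subset[OF G(1)] that by (simp add: Q_def)
  have cH: "continuous_on {y - 2*r..y + 2*r} H"
  proof -
    have "continuous_on ({y - 2*r..y + 2*r} \<times> cbox (x - 2*r) (x + 2*r)) (G \<circ> prod.swap)"
      by (rule continuous_on_compose[OF continuous_on_swap continuous_on_subset[OF G(1)]])
        (auto simp: square_def cbox_Pair_eq)
    then have "continuous_on ({y - 2*r..y + 2*r} \<times> cbox (x - 2*r) (x + 2*r)) (\<lambda>(v, u). G (u, v))"
      by (simp add: o_def case_prod_unfold prod.swap_def)
    from integral_continuous_on_param[OF this] show ?thesis
      by (simp add: H_def)
  qed
  have cV: "continuous_on {x - 2*r..x + 2*r} V"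
  proof -
    have "continuous_on ({x - 2*r..x + 2*r} \<times> cbox (y - 2*r) (y + 2*r)) (\<lambda>(u, v). G (u, v))"
      using continuous_on_subset[OF G(1)] by (auto simp: square_def cbox_Pair_eq)
    from integral_continuous_on_param[OF this] show ?thesis
      by (simp add: V_def)
  qed
  have int: "(\<lambda>s. H (y - s)) integrable_on {r..2*r}" "(\<lambda>s. H (y + s)) integrable_on {r..2*r}"
    "(\<lambda>s. V (x + s)) integrable_on {r..2*r}" "(\<lambda>s. V (x - s)) integrable_on {r..2*r}"
    by (intro integrable_continuous_interval continuous_on_compose2[OF cH] continuous_on_compose2[OF cV];
        auto intro!: continuous_intros)+
  then show "(\<lambda>s. H (y - s) + H (y + s) + V (x + s) + V (x - s)) integrable_on {r..2*r}"
    by (intro integrable_add)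
  have "integral {r..2*r} (\<lambda>s. H (y - s) + H (y + s) + V (x + s) + V (x - s))
      = integral {y - 2*r..y - r} H + integral {y + r..y + 2*r} H
        + integral {x + r..x + 2*r} V + integral {x - 2*r..x - r} V"
    using int integral_reflect_shift_real[of r H y] integral_reflect_shift_real[of r V x]
    by (simp add: integral_add integrable_add)
  also have "integral {y - 2*r..y - r} H = integral (cbox (x - 2*r, y - 2*r) (x + 2*r, y - r)) G"
    unfolding H_def using r by (intro integral_cbox_Pair_iterated(2) GQ) (auto simp: Q_def square_def cbox_Pair_eq)
  also have "integral {y + r..y + 2*r} H = integral (cbox (x - 2*r, y + r) (x + 2*r, y + 2*r)) G"
    unfolding H_def using r by (intro integral_cbox_Pair_iterated(2) GQ) (auto simp: Q_def square_def cbox_Pair_eq)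
  also have "integral {x + r..x + 2*r} V = integral (cbox (x + r, y - 2*r) (x + 2*r, y + 2*r)) G"
    unfolding V_def using r by (intro integral_cbox_Pair_iterated(1) GQ) (auto simp: Q_def square_def cbox_Pair_eq)
  also have "integral {x - 2*r..x - r} V = integral (cbox (x - 2*r, y - 2*r) (x - r, y + 2*r)) G"
    unfolding V_def using r by (intro integral_cbox_Pair_iterated(1) GQ) (auto simp: Q_def square_def cbox_Pair_eq)
  finally have "integral {r..2*r} (\<lambda>s. H (y - s) + H (y + s) + V (x + s) + V (x - s))
      = integral (cbox (x - 2*r, y - 2*r) (x + 2*r, y - r)) G + integral (cbox (x - 2*r, y + r) (x + 2*r, y + 2*r)) G
        + integral (cbox (x + r, y - 2*r) (x + 2*r, y + 2*r)) G + integral (cbox (x - 2*r, y - 2*r) (x - r, y + 2*r)) G" .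
  moreover have "integral (cbox (x - 2*r, y - 2*r) (x + 2*r, y - r)) G \<le> integral Q G"
    "integral (cbox (x - 2*r, y + r) (x + 2*r, y + 2*r)) G \<le> integral Q G"
    "integral (cbox (x + r, y - 2*r) (x + 2*r, y + 2*r)) G \<le> integral Q G"
    "integral (cbox (x - 2*r, y - 2*r) (x - r, y + 2*r)) G \<le> integral Q G"
    using r unfolding Q_def square_def
    by (intro integral_subrectangle_le G[unfolded square_def]; auto simp: cbox_Pair_eq)+
  ultimately show "integral {r..2*r} (\<lambda>s. H (y - s) + H (y + s) + V (x + s) + V (x - s))
      \<le> 4 * integral (square x y (2 * r)) G"
    unfolding Q_def by linarith
qed

lemma norm_le_integral_square:
  fixes f :: "complex \<Rightarrow> complex"
  assumes hol: "f holomorphic_on csquare x y (2 * r)" and r: "0 < r"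
  shows "cmod (f (Complex x y)) \<le> 2 / (pi * r\<^sup>2) * integral (square x y (2 * r)) (\<lambda>p. cmod (f (cplx p)))"
proof -
  define G where "G = (\<lambda>p. cmod (f (cplx p)))"
  have "continuous_on (square x y (2 * r)) G"
    unfolding G_def using holomorphic_on_imp_continuous_on[OF hol] cplx_image_square
    by (intro continuous_intros continuous_on_compose2[OF _ linear_continuous_on[OF bounded_linear_cplx]]) auto
  note frames = integral_square_frames_le[OF this _ r, unfolded G_def cplx_Pair]
  define \<Phi> where "\<Phi> s = integral {x - 2*r..x + 2*r} (\<lambda>u. cmod (f (Complex u (y - s))))
      + integral {x - 2*r..x + 2*r} (\<lambda>u. cmod (f (Complex u (y + s))))
      + integral {y - 2*r..y + 2*r} (\<lambda>v. cmod (f (Complex (x + s) v)))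
      + integral {y - 2*r..y + 2*r} (\<lambda>v. cmod (f (Complex (x - s) v)))" for s
  have "r * (2 * pi * cmod (f (Complex x y))) = integral {r..2*r} (\<lambda>s. 2 * pi * cmod (f (Complex x y)))"
    using r by simp
  also have "\<dots> \<le> integral {r..2*r} (\<lambda>s. \<Phi> s / r)"
    using Cauchy_square_estimate[OF hol r] frames(1)
    by (intro integral_le integrable_on_divide) (auto simp: \<Phi>_def)
  also have "\<dots> = integral {r..2*r} \<Phi> / r"
    by simp
  also have "\<dots> \<le> 4 * integral (square x y (2 * r)) G / r"
    using frames(2) r by (intro divide_right_mono) (auto simp: \<Phi>_def[abs_def] G_def)
  finally show ?thesis
    using r pi_gt_zero by (simp add: G_def field_simps power2_eq_square)
qed

lemma norm_sq_le_set_integral_square: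
  fixes h :: "complex \<Rightarrow> complex"
  assumes h: "h holomorphic_on csquare x y (2 * r)" and r: "0 < r"
  shows "(cmod (h (Complex x y)))\<^sup>2 \<le>
     2 / (pi * r\<^sup>2) * (LINT p:square x y (2 * r)|lborel. (cmod (h (cplx p)))\<^sup>2)"
proof -
  have "continuous_on (square x y (2 * r)) (\<lambda>p. (cmod (h (cplx p)))\<^sup>2)"
    using holomorphic_on_imp_continuous_on[OF h] cplx_image_square
    by (intro continuous_intros continuous_on_compose2[OF _ linear_continuous_on[OF bounded_linear_cplx]]) auto
  then have "(LINT p:square x y (2 * r)|lborel. (cmod (h (cplx p)))\<^sup>2)
      = integral (square x y (2 * r)) (\<lambda>p. cmod ((h (cplx p))\<^sup>2))"
    unfolding square_def by (simp add: set_integrable_cbox_continuous(2) norm_power)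
  moreover have "(\<lambda>z. (h z)\<^sup>2) holomorphic_on csquare x y (2 * r)"
    using h by (intro holomorphic_intros)
  ultimately show ?thesis
    using norm_le_integral_square[of "\<lambda>z. (h z)\<^sup>2", OF _ r] by (simp add: norm_power)
qed

lemma borel_measurable_norm_sq_on_Hpl:
  assumes "h holomorphic_on upper_half"
  shows "(\<lambda>p. indicator Hpl p * (cmod (h (cplx p)))\<^sup>2) \<in> borel_measurable borel"
proof -
  have "continuous_on Hpl (\<lambda>p. (cmod (h (cplx p)))\<^sup>2)"
    using holomorphic_on_upper_half_continuous(1)[OF assms] by (intro continuous_intros)
  from set_borel_measurable_continuous_on_Hpl[OF this] show ?thesis
    by (simp add: set_borel_measurable_def)
qed

definition bergman_sq :: "(complex \<Rightarrow> complex) \<Rightarrow> real" where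
  "bergman_sq h = (LINT p:Hpl|lborel. (cmod (h (cplx p)))\<^sup>2)"

lemma bergman_sq_nonneg: "0 \<le> bergman_sq h"
  unfolding bergman_sq_def by (rule set_integral_nonneg) simp

lemma set_integral_square_le_bergman_sq:
  assumes h: "in_bergman h" and \<rho>: "\<rho> < y"
  shows "(LINT p:square x y \<rho>|lborel. (cmod (h (cplx p)))\<^sup>2) \<le> bergman_sq h"
proof -
  have L2: "set_integrable lborel Hpl (\<lambda>p. (cmod (h (cplx p)))\<^sup>2)"
    using h by (simp add: in_bergman_def)
  have "set_integrable lborel (square x y \<rho>) (\<lambda>p. (cmod (h (cplx p)))\<^sup>2)"
    by (rule set_integrable_subset[OF L2 _ square_subset_Hpl[OF \<rho>]]) (simp add: square_def)
  with L2 show ?thesis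
    unfolding bergman_sq_def using square_subset_Hpl[OF \<rho>] by (intro set_integral_mono_subset) auto
qed

lemma bergman_norm_sq_le:
  assumes h: "in_bergman h" and r: "0 < r" "2 * r < y"
  shows "(cmod (h (Complex x y)))\<^sup>2 \<le> 2 / (pi * r\<^sup>2) * bergman_sq h"
proof -
  have "h holomorphic_on csquare x y (2 * r)"
    using h csquare_subset_upper_half[OF r(2)] holomorphic_on_subset by (auto simp: in_bergman_def)
  from norm_sq_le_set_integral_square[OF this r(1)]
  have "(cmod (h (Complex x y)))\<^sup>2 \<le> 2 / (pi * r\<^sup>2) * (LINT p:square x y (2 * r)|lborel. (cmod (h (cplx p)))\<^sup>2)" .
  also have "\<dots> \<le> 2 / (pi * r\<^sup>2) * bergman_sq h"
    using set_integral_square_le_bergman_sq[OF h r(2)] by (intro mult_left_mono) auto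
  finally show ?thesis .
qed

section \<open>The weighted derivative \<open>y h'\<close> is square integrable\<close>

text \<open>\<open>square x y (y / 4)\<close> is the Whitney square of \<open>(x, y)\<close>. A point \<open>q\<close> lies in the
  Whitney square of \<open>p\<close> only for \<open>p\<close> in a rectangle of area \<open>3 y\<^sub>q\<^sup>2\<close> on which
  \<open>y\<^sub>p \<ge> 4 y\<^sub>q / 5\<close>.\<close>
lemma nn_integral_whitney_weight_le:
  fixes c :: ennreal
  shows "(\<integral>\<^sup>+ p. indicator Hpl p * ennreal (1 / (snd p)\<^sup>2) *
            (indicator (square (fst p) (snd p) (snd p / 4)) q * c) \<partial>lborel) \<le> ennreal (75 / 16) * c"
    (is "(\<integral>\<^sup>+ p. ?\<Psi> p \<partial>lborel) \<le> _")
proof (cases "snd q > 0")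
  case False
  then have zero: "?\<Psi> p = 0" for p
    by (cases q) (auto simp: Hpl_def indicator_def mem_square abs_le_iff)
  have "(\<integral>\<^sup>+ p. ?\<Psi> p \<partial>lborel) = 0"
    by (simp only: zero) simp
  then show ?thesis by simp
next
  case True
  define R where "R = cbox (fst q - snd q, snd q / 2) (fst q + snd q, 2 * snd q)"
  define d where "d = 25 / (16 * (snd q)\<^sup>2)"
  have "?\<Psi> p \<le> ennreal d * c * indicator R p" for p
  proof (cases "p \<in> Hpl \<and> q \<in> square (fst p) (snd p) (snd p / 4)")
    case T: True
    then have yp: "snd p > 0" and b: "\<bar>fst q - fst p\<bar> \<le> snd p / 4" "\<bar>snd q - snd p\<bar> \<le> snd p / 4"
      by (cases q; auto simp: Hpl_def mem_square)+
    note b = b[unfolded abs_le_iff]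
    have "p \<in> R"
      using b True by (cases p) (auto simp: R_def cbox_Pair_eq)
    moreover have "(4 * snd q / 5)\<^sup>2 \<le> (snd p)\<^sup>2"
      using b True by (intro power_mono) auto
    then have "1 / (snd p)\<^sup>2 \<le> d"
      using yp True by (simp add: d_def field_simps power2_eq_square)
    ultimately show ?thesis
      using T by (simp add: mult_right_mono ennreal_leI)
  qed auto
  then have "(\<integral>\<^sup>+ p. ?\<Psi> p \<partial>lborel) \<le> (\<integral>\<^sup>+ p. (ennreal d * c) * indicator R p \<partial>lborel)"
    by (intro nn_integral_mono) auto
  also have "\<dots> = ennreal d * c * emeasure lborel R"
    by (rule nn_integral_cmult_indicator) (simp add: R_def)
  also have "emeasure lborel R = ennreal (3 * (snd q)\<^sup>2)"
    using True unfolding R_def by (subst emeasure_lborel_cbox_Pair) (auto simp: power2_eq_square algebra_simps)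
  also have "ennreal d * c * ennreal (3 * (snd q)\<^sup>2) = ennreal (75 / 16) * c"
    using True by (simp add: d_def ennreal_mult'[symmetric] mult.commute mult.left_commute)
  finally show ?thesis .
qed

lemma nn_integral_whitney_average_le:
  fixes f :: "real \<times> real \<Rightarrow> ennreal"
  assumes f: "f \<in> borel_measurable borel"
  shows "(\<integral>\<^sup>+ p. indicator Hpl p * ennreal (1 / (snd p)\<^sup>2) *
            (\<integral>\<^sup>+ q. indicator (square (fst p) (snd p) (snd p / 4)) q * f q \<partial>lborel) \<partial>lborel)
         \<le> ennreal (75 / 16) * (\<integral>\<^sup>+ q. f q \<partial>lborel)"
proof -
  define S :: "((real \<times> real) \<times> (real \<times> real)) set" where
    "S = {z. \<bar>fst (snd z) - fst (fst z)\<bar> \<le> snd (fst z) / 4 \<and> \<bar>snd (snd z) - snd (fst z)\<bar> \<le> snd (fst z) / 4}"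
  have S: "indicator (square (fst p) (snd p) (snd p / 4)) q = indicator S (p, q)" for p q
    by (cases q) (simp add: S_def indicator_def mem_square)
  have "S \<in> sets borel"
    unfolding S_def by (intro borel_closed closed_Collect_conj closed_Collect_le continuous_intros) auto
  define \<Psi> where "\<Psi> p q = indicator Hpl p * ennreal (1 / (snd p)\<^sup>2) * (indicator S (p, q) * f q)" for p q
  have "(\<lambda>z::(real \<times> real) \<times> (real \<times> real). indicator Hpl (fst z) * ennreal (1 / (snd (fst z))\<^sup>2) *
      (indicator S z * f (snd z))) \<in> borel_measurable borel"
  proof -
    have fst: "(fst :: (real \<times> real) \<times> (real \<times> real) \<Rightarrow> _) \<in> borel_measurable borel"
      and snd: "(snd :: (real \<times> real) \<times> (real \<times> real) \<Rightarrow> _) \<in> borel_measurable borel"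
      and y: "(\<lambda>z::(real \<times> real) \<times> (real \<times> real). 1 / (snd (fst z))\<^sup>2) \<in> borel_measurable borel"
      by (intro borel_measurable_continuous_onI continuous_intros borel_measurable_divide)+
    show ?thesis
      using measurable_compose[OF fst, of "indicator Hpl :: _ \<Rightarrow> ennreal"] measurable_compose[OF snd f]
        measurable_compose[OF y measurable_ennreal] \<open>S \<in> sets borel\<close>
      by (intro borel_measurable_times_ennreal) (auto simp: o_def)
  qed
  then have \<Psi>_meas: "case_prod \<Psi> \<in> borel_measurable (lborel \<Otimes>\<^sub>M lborel)"
    unfolding lborel_prod \<Psi>_def by (simp add: case_prod_beta')
  have "(\<integral>\<^sup>+ p. indicator Hpl p * ennreal (1 / (snd p)\<^sup>2) *
            (\<integral>\<^sup>+ q. indicator (square (fst p) (snd p) (snd p / 4)) q * f q \<partial>lborel) \<partial>lborel)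
      = (\<integral>\<^sup>+ p. (\<integral>\<^sup>+ q. \<Psi> p q \<partial>lborel) \<partial>lborel)"
    using f by (simp add: \<Psi>_def S[symmetric] nn_integral_cmult mult.assoc square_def)
  also have "\<dots> = (\<integral>\<^sup>+ q. (\<integral>\<^sup>+ p. \<Psi> p q \<partial>lborel) \<partial>lborel)"
    using pair_sigma_finite.Fubini'[OF _ \<Psi>_meas] by (simp add: pair_sigma_finite_def sigma_finite_lborel)
  also have "\<dots> \<le> (\<integral>\<^sup>+ q. ennreal (75 / 16) * f q \<partial>lborel)"
    unfolding \<Psi>_def S[symmetric] by (intro nn_integral_mono nn_integral_whitney_weight_le)
  also have "\<dots> = ennreal (75 / 16) * (\<integral>\<^sup>+ q. f q \<partial>lborel)"
    using f by (subst nn_integral_cmult) auto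
  finally show ?thesis .
qed

lemma continuous_on_square_norm_sq:
  assumes "h holomorphic_on upper_half" "\<rho> < y"
  shows "continuous_on (square x y \<rho>) (\<lambda>p. (cmod (h (cplx p)))\<^sup>2)"
  using continuous_on_subset[OF holomorphic_on_upper_half_continuous(1)[OF assms(1)] square_subset_Hpl[OF assms(2)]]
  by (intro continuous_intros)

lemma set_integral_square_mono:
  assumes h: "h holomorphic_on upper_half" and sub: "square x' y' \<rho>' \<subseteq> square x y \<rho>" and \<rho>: "\<rho> < y"
  shows "(LINT q:square x' y' \<rho>'|lborel. (cmod (h (cplx q)))\<^sup>2) \<le> (LINT q:square x y \<rho>|lborel. (cmod (h (cplx q)))\<^sup>2)"
proof -
  have int: "set_integrable lborel (square x y \<rho>) (\<lambda>q. (cmod (h (cplx q)))\<^sup>2)"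
    using set_integrable_cbox_continuous(1)[OF continuous_on_square_norm_sq[OF h \<rho>, unfolded square_def]]
    by (simp add: square_def)
  show ?thesis
    using sub by (intro set_integral_mono_subset int set_integrable_subset[OF int]) (auto simp: square_def)
qed

text \<open>Cauchy's estimate on the circle of radius \<open>y/8\<close>, with \<open>|h|\<close> bounded there by the
  mean value estimate on squares of half-width \<open>y/8\<close>, all inside the Whitney square of
  half-width \<open>y/4\<close>.\<close>
lemma deriv_norm_sq_le_whitney:
  fixes h :: "complex \<Rightarrow> complex"
  assumes h: "h holomorphic_on upper_half" and y: "0 < y"
  shows "y\<^sup>2 * (cmod (deriv h (Complex x y)))\<^sup>2 \<le>
     (32768 / pi) / y\<^sup>2 * (LINT q:square x y (y / 4)|lborel. (cmod (h (cplx q)))\<^sup>2)"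
proof -
  define \<rho> r where "\<rho> = y / 8" and "r = y / 16"
  define I where "I = (LINT q:square x y (y / 4)|lborel. (cmod (h (cplx q)))\<^sup>2)"
  define B where "B = sqrt (2 / (pi * r\<^sup>2) * I)"
  have I: "0 \<le> I"
    unfolding I_def by (rule set_integral_nonneg) simp
  have ball: "cball (Complex x y) \<rho> \<subseteq> upper_half"
  proof
    fix w assume "w \<in> cball (Complex x y) \<rho>"
    then have "\<bar>Im (Complex x y - w)\<bar> \<le> \<rho>"
      using abs_Im_le_cmod[of "Complex x y - w"] by (simp add: dist_norm)
    then show "w \<in> upper_half"
      using y unfolding abs_le_iff by (auto simp: upper_half_def \<rho>_def)
  qed
  have bound: "cmod (h w) \<le> B" if w: "cmod (Complex x y - w) = \<rho>" for w
  proof -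
    have re: "\<bar>Re w - x\<bar> \<le> \<rho>" and im: "\<bar>Im w - y\<bar> \<le> \<rho>"
      using abs_Re_le_cmod[of "Complex x y - w"] abs_Im_le_cmod[of "Complex x y - w"] w
      by (auto simp: abs_minus_commute)
    note re = re[unfolded abs_le_iff] and im = im[unfolded abs_le_iff]
    have r: "0 < r" "2 * r < Im w"
      using y im by (auto simp: r_def \<rho>_def)
    have "(cmod (h w))\<^sup>2 \<le> 2 / (pi * r\<^sup>2) * (LINT q:square (Re w) (Im w) (2 * r)|lborel. (cmod (h (cplx q)))\<^sup>2)"
      using norm_sq_le_set_integral_square[OF holomorphic_on_subset[OF h csquare_subset_upper_half[OF r(2)]] r(1), of "Re w"]
      by simp
    also have "\<dots> \<le> 2 / (pi * r\<^sup>2) * I"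
      unfolding I_def using re im y
      by (intro mult_left_mono set_integral_square_mono[OF h]) (auto simp: square_def cbox_Pair_eq r_def \<rho>_def)
    finally show ?thesis
      unfolding B_def using real_le_rsqrt by blast
  qed
  have "cmod ((deriv ^^ 1) h (Complex x y)) \<le> fact 1 * B / \<rho> ^ 1"
    using ball ball_subset_cball bound y
    by (intro Cauchy_inequality holomorphic_on_subset[OF h] continuous_on_subset[OF holomorphic_on_imp_continuous_on[OF h]])
      (auto simp: \<rho>_def)
  then have "(cmod (deriv h (Complex x y)))\<^sup>2 \<le> (B / \<rho>)\<^sup>2"
    by (intro power_mono) auto
  also have "\<dots> = 2 / (pi * r\<^sup>2) * I / \<rho>\<^sup>2"
    using I by (simp add: B_def power_divide)
  finally show ?thesis
    using y by (simp add: I_def r_def \<rho>_def field_simps power2_eq_square)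
qed

lemma nn_integral_square_norm_sq:
  assumes h: "h holomorphic_on upper_half" and \<rho>: "\<rho> < y" and c: "0 \<le> c"
  shows "(\<integral>\<^sup>+ q. indicator (square x y \<rho>) q * ennreal (c * (indicator Hpl q * (cmod (h (cplx q)))\<^sup>2)) \<partial>lborel)
    = ennreal (c * (LINT q:square x y \<rho>|lborel. (cmod (h (cplx q)))\<^sup>2))"
proof -
  have "set_integrable lborel (square x y \<rho>) (\<lambda>q. c * (cmod (h (cplx q)))\<^sup>2)"
    using set_integrable_cbox_continuous(1)[OF continuous_on_square_norm_sq[OF h \<rho>, unfolded square_def]]
    by (simp add: square_def set_integrable_mult_right)
  from nn_integral_eq_set_integral[OF this]
  have "(\<integral>\<^sup>+ q. ennreal (indicator (square x y \<rho>) q * (c * (cmod (h (cplx q)))\<^sup>2)) \<partial>lborel)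
      = ennreal (c * (LINT q:square x y \<rho>|lborel. (cmod (h (cplx q)))\<^sup>2))"
    using c by simp
  moreover have "indicator (square x y \<rho>) q * ennreal (c * (indicator Hpl q * (cmod (h (cplx q)))\<^sup>2))
      = ennreal (indicator (square x y \<rho>) q * (c * (cmod (h (cplx q)))\<^sup>2))" for q
    using square_subset_Hpl[OF \<rho>] by (auto simp: indicator_def)
  ultimately show ?thesis
    by simp
qed

lemma weighted_deriv_le_whitney_average:
  assumes h: "h holomorphic_on upper_half"
  shows "ennreal (indicator Hpl p * ((snd p)\<^sup>2 * (cmod (deriv h (cplx p)))\<^sup>2))
    \<le> indicator Hpl p * ennreal (1 / (snd p)\<^sup>2) * (\<integral>\<^sup>+ q. indicator (square (fst p) (snd p) (snd p / 4)) q *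
          ennreal (32768 / pi * (indicator Hpl q * (cmod (h (cplx q)))\<^sup>2)) \<partial>lborel)"
proof (cases "p \<in> Hpl")
  case True
  then have y: "0 < snd p" "snd p / 4 < snd p"
    by (auto simp: Hpl_def)
  define I where "I = (LINT q:square (fst p) (snd p) (snd p / 4)|lborel. (cmod (h (cplx q)))\<^sup>2)"
  have "0 \<le> I"
    unfolding I_def by (rule set_integral_nonneg) simp
  have "(snd p)\<^sup>2 * (cmod (deriv h (cplx p)))\<^sup>2 \<le> 1 / (snd p)\<^sup>2 * (32768 / pi * I)"
    using deriv_norm_sq_le_whitney[OF h y(1), of "fst p"] by (simp add: I_def cplx_def mult.commute)
  then have "ennreal ((snd p)\<^sup>2 * (cmod (deriv h (cplx p)))\<^sup>2) \<le> ennreal (1 / (snd p)\<^sup>2) * ennreal (32768 / pi * I)"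
    using \<open>0 \<le> I\<close> by (simp add: ennreal_mult[symmetric] ennreal_leI)
  then show ?thesis
    using True nn_integral_square_norm_sq[OF h y(2), of "32768 / pi" "fst p"] by (simp add: I_def)
qed simp

lemma bergman_weighted_deriv:
  assumes h: "in_bergman h"
  shows "set_integrable lborel Hpl (\<lambda>p. (snd p)\<^sup>2 * (cmod (deriv h (cplx p)))\<^sup>2)"
    and "(LINT p:Hpl|lborel. (snd p)\<^sup>2 * (cmod (deriv h (cplx p)))\<^sup>2) \<le> 153600 / pi * bergman_sq h"
proof -
  have hol: "h holomorphic_on upper_half" and L2: "set_integrable lborel Hpl (\<lambda>p. (cmod (h (cplx p)))\<^sup>2)"
    using h by (auto simp: in_bergman_def)
  define f where "f q = ennreal (32768 / pi * (indicator Hpl q * (cmod (h (cplx q)))\<^sup>2))" for q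
  have f_meas: "f \<in> borel_measurable borel"
    using borel_measurable_norm_sq_on_Hpl[OF hol]
    unfolding f_def[abs_def] by (simp add: measurable_compose[OF _ measurable_ennreal])
  have "(\<integral>\<^sup>+ p. ennreal (indicator Hpl p * ((snd p)\<^sup>2 * (cmod (deriv h (cplx p)))\<^sup>2)) \<partial>lborel)
      \<le> (\<integral>\<^sup>+ p. indicator Hpl p * ennreal (1 / (snd p)\<^sup>2) *
          (\<integral>\<^sup>+ q. indicator (square (fst p) (snd p) (snd p / 4)) q * f q \<partial>lborel) \<partial>lborel)"
    unfolding f_def by (intro nn_integral_mono weighted_deriv_le_whitney_average hol)
  also have "\<dots> \<le> ennreal (75 / 16) * (\<integral>\<^sup>+ q. f q \<partial>lborel)"
    by (rule nn_integral_whitney_average_le[OF f_meas])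
  also have "(\<integral>\<^sup>+ q. f q \<partial>lborel) = ennreal (32768 / pi * bergman_sq h)"
    using nn_integral_eq_set_integral[OF set_integrable_mult_right[OF L2, of "32768 / pi"]]
    by (simp add: f_def bergman_sq_def mult.left_commute)
  also have "ennreal (75 / 16) * \<dots> = ennreal (153600 / pi * bergman_sq h)"
    using bergman_sq_nonneg[of h] by (simp add: ennreal_mult[symmetric])
  finally have bound: "(\<integral>\<^sup>+ p. ennreal (indicator Hpl p * ((snd p)\<^sup>2 * (cmod (deriv h (cplx p)))\<^sup>2)) \<partial>lborel)
      \<le> ennreal (153600 / pi * bergman_sq h)" .
  have "continuous_on Hpl (\<lambda>p. (snd p)\<^sup>2 * (cmod (deriv h (cplx p)))\<^sup>2)"
    using holomorphic_on_upper_half_continuous(2)[OF hol] by (intro continuous_intros)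
  note set_integrable_of_nn_integral_le[OF set_borel_measurable_continuous_on_Hpl[OF this] _ bound]
  then show "set_integrable lborel Hpl (\<lambda>p. (snd p)\<^sup>2 * (cmod (deriv h (cplx p)))\<^sup>2)"
    and "(LINT p:Hpl|lborel. (snd p)\<^sup>2 * (cmod (deriv h (cplx p)))\<^sup>2) \<le> 153600 / pi * bergman_sq h"
    using bergman_sq_nonneg[of h] by auto
qed

text \<open>For \<open>u = form_of h\<close> the \<open>H\<^sup>1\<close> integrand \<open>|u|\<^sup>2 + 2 |Def u|\<^sup>2\<close> is \<open>|h1_vec a h|\<^sup>2\<close>, so the
  \<open>H\<^sup>1\<close> norm is an \<open>L\<^sup>2\<close> norm of a \<open>\<complex>\<^sup>2\<close>-valued function and Minkowski's inequality applies.\<close>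
definition h1_vec :: "real \<Rightarrow> (complex \<Rightarrow> complex) \<Rightarrow> real \<times> real \<Rightarrow> complex \<times> complex" where
  "h1_vec a h p = (h (cplx p), of_real (2 * a) * (of_real (snd p) * deriv h (cplx p) - \<i> * h (cplx p)))"

lemma norm_h1_vec_sq:
  "(norm (h1_vec a h p))\<^sup>2 = (cmod (h (cplx p)))\<^sup>2 +
     2 * (2 * a\<^sup>2 * (cmod (of_real (snd p) * deriv h (cplx p) - \<i> * h (cplx p)))\<^sup>2)"
  by (simp add: h1_vec_def norm_Pair norm_mult power_mult_distrib)

lemma norm_h1_vec_sq_le:
  "(norm (h1_vec a h p))\<^sup>2 \<le> (1 + 8 * a\<^sup>2) * (cmod (h (cplx p)))\<^sup>2 + 8 * a\<^sup>2 * ((snd p)\<^sup>2 * (cmod (deriv h (cplx p)))\<^sup>2)"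
proof -
  have "(cmod (of_real (snd p) * deriv h (cplx p) + - (\<i> * h (cplx p))))\<^sup>2
      \<le> 2 * (cmod (of_real (snd p) * deriv h (cplx p)))\<^sup>2 + 2 * (cmod (- (\<i> * h (cplx p))))\<^sup>2"
    using norm_add_sq_le[of 1 "of_real (snd p) * deriv h (cplx p)" "- (\<i> * h (cplx p))"] by simp
  then have "4 * a\<^sup>2 * (cmod (of_real (snd p) * deriv h (cplx p) - \<i> * h (cplx p)))\<^sup>2
      \<le> 4 * a\<^sup>2 * (2 * ((snd p)\<^sup>2 * (cmod (deriv h (cplx p)))\<^sup>2) + 2 * (cmod (h (cplx p)))\<^sup>2)"
    by (intro mult_left_mono) (auto simp: norm_mult power_mult_distrib)
  then show ?thesis
    unfolding norm_h1_vec_sq by (simp add: algebra_simps)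
qed

lemma continuous_on_h1_vec:
  assumes "h holomorphic_on upper_half"
  shows "continuous_on Hpl (h1_vec a h)"
  unfolding h1_vec_def[abs_def] using holomorphic_on_upper_half_continuous[OF assms]
  by (intro continuous_intros) auto

lemma bergman_h1_vec:
  assumes h: "in_bergman h"
  shows "set_integrable lborel Hpl (\<lambda>p. (norm (h1_vec a h p))\<^sup>2)"
    and "bergman_sq h \<le> (LINT p:Hpl|lborel. (norm (h1_vec a h p))\<^sup>2)"
    and "(LINT p:Hpl|lborel. (norm (h1_vec a h p))\<^sup>2) \<le> (1 + 8 * a\<^sup>2 * (1 + 153600 / pi)) * bergman_sq h"
proof -
  have L2: "set_integrable lborel Hpl (\<lambda>p. (cmod (h (cplx p)))\<^sup>2)"
    using h by (simp add: in_bergman_def)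
  note D = bergman_weighted_deriv[OF h]
  have bound: "set_integrable lborel Hpl
      (\<lambda>p. (1 + 8 * a\<^sup>2) * (cmod (h (cplx p)))\<^sup>2 + 8 * a\<^sup>2 * ((snd p)\<^sup>2 * (cmod (deriv h (cplx p)))\<^sup>2))"
    using L2 D(1) by (intro set_integral_add set_integrable_mult_right)
  have "set_borel_measurable lborel Hpl (\<lambda>p. (norm (h1_vec a h p))\<^sup>2)"
    using continuous_on_h1_vec h unfolding in_bergman_def
    by (intro set_borel_measurable_continuous_on_Hpl continuous_intros) auto
  then show int: "set_integrable lborel Hpl (\<lambda>p. (norm (h1_vec a h p))\<^sup>2)"
    using norm_h1_vec_sq_le by (intro set_integrable_bound[OF bound]) (auto intro!: AE_I2)
  show "bergman_sq h \<le> (LINT p:Hpl|lborel. (norm (h1_vec a h p))\<^sup>2)"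
    unfolding bergman_sq_def using L2 int by (intro set_integral_mono) (auto simp: norm_h1_vec_sq)
  have "(LINT p:Hpl|lborel. (norm (h1_vec a h p))\<^sup>2)
      \<le> (LINT p:Hpl|lborel. (1 + 8 * a\<^sup>2) * (cmod (h (cplx p)))\<^sup>2 + 8 * a\<^sup>2 * ((snd p)\<^sup>2 * (cmod (deriv h (cplx p)))\<^sup>2))"
    using int bound norm_h1_vec_sq_le by (intro set_integral_mono)
  also have "\<dots> = (1 + 8 * a\<^sup>2) * bergman_sq h
      + 8 * a\<^sup>2 * (LINT p:Hpl|lborel. (snd p)\<^sup>2 * (cmod (deriv h (cplx p)))\<^sup>2)"
    using L2 D(1) by (simp add: bergman_sq_def set_integral_add set_integrable_mult_right)
  also have "\<dots> \<le> (1 + 8 * a\<^sup>2) * bergman_sq h + 8 * a\<^sup>2 * (153600 / pi * bergman_sq h)"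
    using D(2) by (intro add_left_mono mult_left_mono) auto
  finally show "(LINT p:Hpl|lborel. (norm (h1_vec a h p))\<^sup>2) \<le> (1 + 8 * a\<^sup>2 * (1 + 153600 / pi)) * bergman_sq h"
    by (simp add: algebra_simps)
qed

lemma H1norm_form_of:
  assumes a: "a \<noteq> 0" and h: "in_bergman h"
  shows "in_L2 a (form_of h)" "Def_in_L2 a (form_of h)"
    and "H1norm a (form_of h) = sqrt (LINT p:Hpl|lborel. (norm (h1_vec a h p))\<^sup>2)"
proof -
  define Dh where "Dh p = 2 * a\<^sup>2 * (cmod (of_real (snd p) * deriv h (cplx p) - \<i> * h (cplx p)))\<^sup>2" for p
  have hol: "h holomorphic_on upper_half" and L2: "set_integrable lborel Hpl (\<lambda>p. (cmod (h (cplx p)))\<^sup>2)"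
    using h by (auto simp: in_bergman_def)
  have W: "(norm (h1_vec a h p))\<^sup>2 = (cmod (h (cplx p)))\<^sup>2 + 2 * Dh p" for p
    by (simp add: norm_h1_vec_sq Dh_def)
  have "set_integrable lborel Hpl (\<lambda>p. 1 / 2 * ((norm (h1_vec a h p))\<^sup>2 - (cmod (h (cplx p)))\<^sup>2))"
    using bergman_h1_vec(1)[OF h] L2 by (intro set_integrable_mult_right set_integral_diff)
  then have DhL2: "set_integrable lborel Hpl Dh"
    by (simp add: W)
  show "in_L2 a (form_of h)"
    using in_L2_form_of[OF a] L2 by simp
  show "Def_in_L2 a (form_of h)"
    unfolding Def_in_L2_def using DhL2 Def_sq_form_of[OF hol] by (subst set_integrable_cong) (auto simp: Dh_def)
  have "L2sq a (form_of h) = bergman_sq h"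
    unfolding L2sq_def bergman_sq_def using form_sq_form_of[OF a]
    by (intro set_lebesgue_integral_cong) auto
  moreover have "DefL2sq a (form_of h) = (LINT p:Hpl|lborel. Dh p)"
    unfolding DefL2sq_def using Def_sq_form_of[OF hol]
    by (intro set_lebesgue_integral_cong) (auto simp: Dh_def)
  moreover have "(LINT p:Hpl|lborel. (norm (h1_vec a h p))\<^sup>2) = bergman_sq h + 2 * (LINT p:Hpl|lborel. Dh p)"
    unfolding W bergman_sq_def using L2 DhL2 by (simp add: set_integral_add set_integrable_mult_right)
  ultimately show "H1norm a (form_of h) = sqrt (LINT p:Hpl|lborel. (norm (h1_vec a h p))\<^sup>2)"
    by (simp add: H1norm_def)
qed

lemma form_of_zero: "form_of (\<lambda>z. 0) = (\<lambda>p. 0)"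
  by (simp add: fun_eq_iff form_of_def zero_prod_def)

lemma form_of_add: "form_of (\<lambda>z. h z + k z) = (\<lambda>p. form_of h p + form_of k p)"
  by (simp add: fun_eq_iff form_of_def zero_prod_def)

lemma form_of_diff: "form_of (\<lambda>z. h z - k z) = (\<lambda>p. form_of h p - form_of k p)"
  by (simp add: fun_eq_iff form_of_def zero_prod_def)

lemma form_of_scaleR: "form_of (\<lambda>z. of_real c * h z) = (\<lambda>p. c *\<^sub>R form_of h p)"
  by (simp add: fun_eq_iff form_of_def zero_prod_def)

lemma form_of_eq_zero_iff: "form_of h = (\<lambda>p. 0) \<longleftrightarrow> (\<forall>p\<in>Hpl. h (cplx p) = 0)"
  by (auto simp: fun_eq_iff form_of_def zero_prod_def complex_eq_iff)

lemma h1_vec_add: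
  assumes "h holomorphic_on upper_half" "k holomorphic_on upper_half" "p \<in> Hpl"
  shows "h1_vec a (\<lambda>z. h z + k z) p = h1_vec a h p + h1_vec a k p"
  using assms open_upper_half holomorphic_on_imp_differentiable_at[of _ upper_half "cplx p"]
  by (simp add: h1_vec_def algebra_simps)

lemma h1_vec_scaleR:
  assumes "h holomorphic_on upper_half" "p \<in> Hpl"
  shows "h1_vec a (\<lambda>z. of_real c * h z) p = c *\<^sub>R h1_vec a h p"
  using assms open_upper_half holomorphic_on_imp_differentiable_at[of h upper_half "cplx p"]
  by (simp add: h1_vec_def algebra_simps deriv_cmult scaleR_conv_of_real)

lemma in_bergman_zero: "in_bergman (\<lambda>z. 0)"
  by (simp add: in_bergman_def set_integrable_def)

lemma in_bergman_scaleR: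
  assumes "in_bergman h"
  shows "in_bergman (\<lambda>z. of_real c * h z)"
proof -
  have "(\<lambda>p. (cmod (of_real c * h (cplx p)))\<^sup>2) = (\<lambda>p. c\<^sup>2 * (cmod (h (cplx p)))\<^sup>2)"
    by (simp add: fun_eq_iff norm_mult power_mult_distrib)
  then show ?thesis
    using assms by (auto simp: in_bergman_def intro!: holomorphic_intros set_integrable_mult_right)
qed

lemma in_bergman_add:
  assumes h: "in_bergman h" and k: "in_bergman k"
  shows "in_bergman (\<lambda>z. h z + k z)"
proof -
  have hol: "h holomorphic_on upper_half" "k holomorphic_on upper_half"
    using h k by (auto simp: in_bergman_def)
  have "set_borel_measurable lborel Hpl (\<lambda>p. (cmod (h (cplx p) + k (cplx p)))\<^sup>2)"
    using holomorphic_on_upper_half_continuous(1)[OF hol(1)] holomorphic_on_upper_half_continuous(1)[OF hol(2)]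
    by (intro set_borel_measurable_continuous_on_Hpl continuous_intros)
  then show ?thesis
    using set_integral_minkowski(1)[of lborel Hpl "\<lambda>p. h (cplx p)" "\<lambda>p. k (cplx p)"] h k
    by (auto simp: in_bergman_def intro!: holomorphic_intros)
qed

lemma in_bergman_diff: "in_bergman h \<Longrightarrow> in_bergman k \<Longrightarrow> in_bergman (\<lambda>z. h z - k z)"
  using in_bergman_add[OF _ in_bergman_scaleR[of k "-1"], of h] by simp

lemma H1norm_form_of_scaleR:
  assumes "a \<noteq> 0" "in_bergman h"
  shows "H1norm a (\<lambda>p. c *\<^sub>R form_of h p) = \<bar>c\<bar> * H1norm a (form_of h)"
proof -
  have "(LINT p:Hpl|lborel. (norm (h1_vec a (\<lambda>z. of_real c * h z) p))\<^sup>2)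
      = (LINT p:Hpl|lborel. c\<^sup>2 * (norm (h1_vec a h p))\<^sup>2)"
    using assms(2) by (intro set_lebesgue_integral_cong) (auto simp: h1_vec_scaleR in_bergman_def power_mult_distrib)
  then show ?thesis
    using H1norm_form_of(3)[OF assms] H1norm_form_of(3)[OF assms(1) in_bergman_scaleR[OF assms(2)]]
    by (simp add: form_of_scaleR real_sqrt_mult)
qed

lemma H1norm_form_of_add_le:
  assumes a: "a \<noteq> 0" and h: "in_bergman h" and k: "in_bergman k"
  shows "H1norm a (\<lambda>p. form_of h p + form_of k p) \<le> H1norm a (form_of h) + H1norm a (form_of k)"
proof -
  have hol: "h holomorphic_on upper_half" "k holomorphic_on upper_half"
    using h k by (auto simp: in_bergman_def)
  have "(LINT p:Hpl|lborel. (norm (h1_vec a (\<lambda>z. h z + k z) p))\<^sup>2)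
      = (LINT p:Hpl|lborel. (norm (h1_vec a h p + h1_vec a k p))\<^sup>2)"
    using hol by (intro set_lebesgue_integral_cong) (auto simp: h1_vec_add)
  moreover have "set_borel_measurable lborel Hpl (\<lambda>p. (norm (h1_vec a h p + h1_vec a k p))\<^sup>2)"
    using continuous_on_h1_vec[OF hol(1)] continuous_on_h1_vec[OF hol(2)]
    by (intro set_borel_measurable_continuous_on_Hpl continuous_intros)
  ultimately show ?thesis
    using set_integral_minkowski(2)[OF bergman_h1_vec(1)[OF h] bergman_h1_vec(1)[OF k]]
      H1norm_form_of(3)[OF a] h k in_bergman_add[OF h k]
    by (simp add: form_of_add[symmetric])
qed

lemma H1norm_form_of_eq_0:
  assumes a: "a \<noteq> 0" and h: "in_bergman h" and 0: "H1norm a (form_of h) = 0"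
  shows "form_of h = (\<lambda>p. 0)"
proof -
  have "bergman_sq h \<le> 0"
    using bergman_h1_vec(2)[OF h, of a] 0 H1norm_form_of(3)[OF a h] bergman_h1_vec(1)[OF h, of a]
    by (simp add: set_integral_nonneg)
  have "h (cplx p) = 0" if p: "p \<in> Hpl" for p
  proof -
    have "(cmod (h (cplx p)))\<^sup>2 \<le> 2 / (pi * (snd p / 4)\<^sup>2) * bergman_sq h"
      using bergman_norm_sq_le[OF h, of "snd p / 4" "snd p" "fst p"] p by (simp add: Hpl_def cplx_def)
    also have "\<dots> \<le> 0"
      using \<open>bergman_sq h \<le> 0\<close> by (intro mult_nonneg_nonpos) auto
    finally show ?thesis by simp
  qed
  then show ?thesis
    by (simp add: form_of_eq_zero_iff)
qed

section \<open>Completeness\<close>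

lemma in_bergman_of_pointwise_limit:
  assumes k: "\<And>m. in_bergman (k m)" and F: "F holomorphic_on upper_half"
    and lim: "\<And>z. z \<in> upper_half \<Longrightarrow> (\<lambda>m. k m z) \<longlonglongrightarrow> F z"
    and bound: "\<And>m. m \<ge> N \<Longrightarrow> bergman_sq (k m) \<le> e"
  shows "in_bergman F" and "bergman_sq F \<le> e"
proof -
  define g where "g m p = ennreal (indicator Hpl p * (cmod (k m (cplx p)))\<^sup>2)" for m p
  define f where "f p = indicator Hpl p * (cmod (F (cplx p)))\<^sup>2" for p
  have g_meas: "g m \<in> borel_measurable lborel" for m
    using borel_measurable_norm_sq_on_Hpl[of "k m"] k[of m]
    by (simp add: g_def[abs_def] in_bergman_def measurable_compose[OF _ measurable_ennreal])
  have g_lim: "(\<lambda>m. g m p) \<longlonglongrightarrow> ennreal (f p)" for p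
    using lim[of "cplx p"] unfolding g_def f_def
    by (cases "p \<in> Hpl") (auto intro!: tendsto_ennrealI tendsto_intros)
  have "(\<integral>\<^sup>+ p. ennreal (f p) \<partial>lborel) = (\<integral>\<^sup>+ p. liminf (\<lambda>m. g m p) \<partial>lborel)"
    using g_lim by (intro nn_integral_cong) (simp add: lim_imp_Liminf[symmetric])
  also have "\<dots> \<le> liminf (\<lambda>m. \<integral>\<^sup>+ p. g m p \<partial>lborel)"
    using g_meas by (intro nn_integral_liminf) simp
  also have "(\<lambda>m. \<integral>\<^sup>+ p. g m p \<partial>lborel) = (\<lambda>m. ennreal (bergman_sq (k m)))"
  proof
    fix m
    show "(\<integral>\<^sup>+ p. g m p \<partial>lborel) = ennreal (bergman_sq (k m))"
      using nn_integral_eq_set_integral[of lborel Hpl "\<lambda>p. (cmod (k m (cplx p)))\<^sup>2"] k[of m]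
      by (simp add: g_def in_bergman_def bergman_sq_def)
  qed
  also have "liminf \<dots> \<le> ennreal e"
    using bound by (intro Liminf_le) (auto simp: eventually_sequentially intro!: ennreal_leI exI[of _ N])
  finally have "(\<integral>\<^sup>+ p. ennreal (indicator Hpl p * (cmod (F (cplx p)))\<^sup>2) \<partial>lborel) \<le> ennreal e"
    by (simp add: f_def)
  moreover have "set_borel_measurable lborel Hpl (\<lambda>p. (cmod (F (cplx p)))\<^sup>2)"
    using borel_measurable_norm_sq_on_Hpl[OF F] by (simp add: set_borel_measurable_def)
  moreover have "0 \<le> e"
    using bound[of N] bergman_sq_nonneg[of "k N"] by simp
  ultimately show "in_bergman F" and "bergman_sq F \<le> e"
    using F set_integrable_of_nn_integral_le[of lborel Hpl "\<lambda>p. (cmod (F (cplx p)))\<^sup>2" e]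
    by (auto simp: in_bergman_def bergman_sq_def)
qed

lemma Im_gt_in_cball:
  assumes "w \<in> cball z (Im z / 8)" "0 < Im z"
  shows "Im z / 2 < Im w"
proof -
  have "\<bar>Im z - Im w\<bar> \<le> Im z / 8"
    using assms(1) abs_Im_le_cmod[of "z - w"] by (simp add: dist_norm)
  then show ?thesis
    using assms(2) unfolding abs_le_iff by simp
qed

lemma bergman_uniformly_Cauchy_on_cball:
  assumes h: "\<And>n. in_bergman (h n)"
    and Cauchy: "\<And>e. 0 < e \<Longrightarrow> \<exists>N. \<forall>m\<ge>N. \<forall>n\<ge>N. bergman_sq (\<lambda>z. h m z - h n z) < e"
    and z: "z \<in> upper_half"
  shows "uniformly_Cauchy_on (cball z (Im z / 8)) h"
proof (rule uniformly_Cauchy_onI)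
  fix e :: real assume e: "0 < e"
  define r where "r = Im z / 4"
  have r: "0 < r"
    using z by (simp add: r_def upper_half_def)
  obtain N where N: "\<forall>m\<ge>N. \<forall>n\<ge>N. bergman_sq (\<lambda>z. h m z - h n z) < e\<^sup>2 * (pi * r\<^sup>2) / 2"
    using Cauchy[of "e\<^sup>2 * (pi * r\<^sup>2) / 2"] e r by auto
  have "dist (h m w) (h n w) < e" if w: "w \<in> cball z (Im z / 8)" and mn: "m \<ge> N" "n \<ge> N" for w m n
  proof -
    have "(cmod (h m w - h n w))\<^sup>2 \<le> 2 / (pi * r\<^sup>2) * bergman_sq (\<lambda>z. h m z - h n z)"
      using bergman_norm_sq_le[OF in_bergman_diff[OF h[of m] h[of n]] r, of "Im w" "Re w"]
        Im_gt_in_cball[OF w] z by (simp add: r_def upper_half_def)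
    also have "\<dots> < 2 / (pi * r\<^sup>2) * (e\<^sup>2 * (pi * r\<^sup>2) / 2)"
      using N mn r by (intro mult_strict_left_mono) auto
    also have "\<dots> = e\<^sup>2"
      using r by (simp add: field_simps)
    finally show ?thesis
      using e by (simp add: dist_norm power_less_imp_less_base)
  qed
  then show "\<exists>M. \<forall>w\<in>cball z (Im z / 8). \<forall>m\<ge>M. \<forall>n\<ge>M. dist (h m w) (h n w) < e"
    by blast
qed

lemma bergman_Cauchy_limit:
  assumes h: "\<And>n. in_bergman (h n)"
    and Cauchy: "\<And>e. 0 < e \<Longrightarrow> \<exists>N. \<forall>m\<ge>N. \<forall>n\<ge>N. bergman_sq (\<lambda>z. h m z - h n z) < e"
  obtains G where "G holomorphic_on upper_half" "\<And>z. z \<in> upper_half \<Longrightarrow> (\<lambda>n. h n z) \<longlonglongrightarrow> G z"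
proof -
  have unif: "uniformly_Cauchy_on (cball z (Im z / 8)) h" if "z \<in> upper_half" for z
    using h Cauchy that by (rule bergman_uniformly_Cauchy_on_cball)
  define G where "G w = lim (\<lambda>n. h n w)" for w
  have ulim: "uniform_limit (cball z (Im z / 8)) h G sequentially" if z: "z \<in> upper_half" for z
  proof -
    obtain l where l: "uniform_limit (cball z (Im z / 8)) h l sequentially"
      using Cauchy_uniformly_convergent[OF unif[OF z]] unfolding uniformly_convergent_on_def by blast
    moreover have "l w = G w" if "w \<in> cball z (Im z / 8)" for w
      using tendsto_uniform_limitI[OF l that] by (simp add: G_def limI)
    then have "uniform_limit (cball z (Im z / 8)) h l sequentially \<longleftrightarrow>
        uniform_limit (cball z (Im z / 8)) h G sequentially"
      by (intro uniform_limit_cong) auto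
    ultimately show ?thesis
      by simp
  qed
  show ?thesis
  proof
    show "G holomorphic_on upper_half"
    proof (rule holomorphic_uniform_sequence[OF open_upper_half])
      show "h n holomorphic_on upper_half" for n
        using h by (simp add: in_bergman_def)
      fix z assume z: "z \<in> upper_half"
      then show "\<exists>d>0. cball z d \<subseteq> upper_half \<and> uniform_limit (cball z d) h G sequentially"
        using Im_gt_in_cball[of _ z] ulim[OF z] by (intro exI[of _ "Im z / 8"]) (force simp: upper_half_def)
    qed
    show "(\<lambda>n. h n z) \<longlonglongrightarrow> G z" if "z \<in> upper_half" for z
      using that by (intro tendsto_uniform_limitI[OF ulim]) (auto simp: upper_half_def)
  qed
qed

lemma bergman_complete:
  assumes h: "\<And>n. in_bergman (h n)"
    and Cauchy: "\<And>e. 0 < e \<Longrightarrow> \<exists>N. \<forall>m\<ge>N. \<forall>n\<ge>N. bergman_sq (\<lambda>z. h m z - h n z) < e"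
  obtains G where "in_bergman G" "(\<lambda>n. bergman_sq (\<lambda>z. h n z - G z)) \<longlonglongrightarrow> 0"
proof -
  obtain G where G: "G holomorphic_on upper_half" "\<And>z. z \<in> upper_half \<Longrightarrow> (\<lambda>n. h n z) \<longlonglongrightarrow> G z"
    using bergman_Cauchy_limit[OF h Cauchy] by blast
  have close: "in_bergman (\<lambda>z. h n z - G z) \<and> bergman_sq (\<lambda>z. h n z - G z) \<le> e"
    if N: "\<forall>m\<ge>N. \<forall>n\<ge>N. bergman_sq (\<lambda>z. h m z - h n z) < e" and n: "n \<ge> N" for N n e
  proof -
    have "in_bergman (\<lambda>z. h n z - h m z)" for m
      using in_bergman_diff[OF h h] .
    moreover have "(\<lambda>z. h n z - G z) holomorphic_on upper_half"
      using G(1) h by (auto simp: in_bergman_def intro!: holomorphic_intros)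
    moreover have "(\<lambda>m. h n z - h m z) \<longlonglongrightarrow> h n z - G z" if "z \<in> upper_half" for z
      using G(2)[OF that] by (intro tendsto_intros)
    moreover have "bergman_sq (\<lambda>z. h n z - h m z) \<le> e" if "m \<ge> N" for m
      using N n that by (simp add: less_imp_le)
    ultimately show ?thesis
      using in_bergman_of_pointwise_limit[where k="\<lambda>m z. h n z - h m z" and F="\<lambda>z. h n z - G z"] by blast
  qed
  obtain N1 where "\<forall>m\<ge>N1. \<forall>n\<ge>N1. bergman_sq (\<lambda>z. h m z - h n z) < 1"
    using Cauchy[of 1] by auto
  then have "in_bergman (\<lambda>z. h N1 z - G z)"
    using close[of N1 1 N1] by simp
  from in_bergman_diff[OF h this] have "in_bergman (\<lambda>z. h N1 z - (h N1 z - G z))" .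
  then have "in_bergman G"
    by simp
  moreover have "(\<lambda>n. bergman_sq (\<lambda>z. h n z - G z)) \<longlonglongrightarrow> 0"
  proof (rule LIMSEQ_I)
    fix e :: real assume "0 < e"
    then obtain N where "\<forall>m\<ge>N. \<forall>n\<ge>N. bergman_sq (\<lambda>z. h m z - h n z) < e / 2"
      using Cauchy[of "e / 2"] by auto
    then have "norm (bergman_sq (\<lambda>z. h n z - G z) - 0) < e" if "n \<ge> N" for n
      using close[of N "e / 2" n] that \<open>0 < e\<close> bergman_sq_nonneg[of "\<lambda>z. h n z - G z"] by simp
    then show "\<exists>N. \<forall>n\<ge>N. norm (bergman_sq (\<lambda>z. h n z - G z) - 0) < e"
      by blast
  qed
  ultimately show ?thesis
    using that by blast
qed

lemma H1norm_form_of_nonneg: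
  assumes "a \<noteq> 0" "in_bergman h"
  shows "0 \<le> H1norm a (form_of h)"
  using H1norm_form_of(3)[OF assms] by (simp add: set_integral_nonneg)

lemma H1norm_form_of_sq_bounds:
  assumes "a \<noteq> 0" "in_bergman h"
  shows "bergman_sq h \<le> (H1norm a (form_of h))\<^sup>2"
    and "(H1norm a (form_of h))\<^sup>2 \<le> (1 + 8 * a\<^sup>2 * (1 + 153600 / pi)) * bergman_sq h"
  using bergman_h1_vec[OF assms(2), of a] H1norm_form_of(3)[OF assms]
  by (simp_all add: set_integral_nonneg)

lemma FF_complete:
  assumes a: "a \<noteq> 0" and X: "\<And>n. X n \<in> FF a"
    and Cauchy: "\<And>e. 0 < e \<Longrightarrow> \<exists>N. \<forall>m\<ge>N. \<forall>n\<ge>N. H1norm a (\<lambda>p. X m p - X n p) < e"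
  shows "\<exists>u\<in>FF a. (\<lambda>n. H1norm a (\<lambda>p. X n p - u p)) \<longlonglongrightarrow> 0"
proof -
  define C where "C = 1 + 8 * a\<^sup>2 * (1 + 153600 / pi)"
  have "\<forall>n. \<exists>h. in_bergman h \<and> X n = form_of h"
    using X FF_eq_form_of_bergman[OF a] by blast
  then obtain h where h: "\<And>n. in_bergman (h n)" and Xh: "\<And>n. X n = form_of (h n)"
    by metis
  have Cauchy_h: "\<exists>N. \<forall>m\<ge>N. \<forall>n\<ge>N. bergman_sq (\<lambda>z. h m z - h n z) < e" if e: "0 < e" for e
  proof -
    obtain N where N: "\<forall>m\<ge>N. \<forall>n\<ge>N. H1norm a (\<lambda>p. X m p - X n p) < sqrt e"
      using Cauchy[of "sqrt e"] e by auto
    have "bergman_sq (\<lambda>z. h m z - h n z) < e" if "m \<ge> N" "n \<ge> N" for m n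
    proof -
      have "bergman_sq (\<lambda>z. h m z - h n z) \<le> (H1norm a (\<lambda>p. X m p - X n p))\<^sup>2"
        using H1norm_form_of_sq_bounds(1)[OF a in_bergman_diff[OF h h]] by (simp add: Xh form_of_diff)
      also have "\<dots> < (sqrt e)\<^sup>2"
        using N that H1norm_form_of_nonneg[OF a in_bergman_diff[OF h h]]
        by (intro power_strict_mono) (auto simp: Xh form_of_diff)
      finally show ?thesis
        using e by simp
    qed
    then show ?thesis
      by blast
  qed
  obtain G where G: "in_bergman G" and lim: "(\<lambda>n. bergman_sq (\<lambda>z. h n z - G z)) \<longlonglongrightarrow> 0"
    using bergman_complete[of h, OF h Cauchy_h] by blast
  have upper_lim: "(\<lambda>n. sqrt (C * bergman_sq (\<lambda>z. h n z - G z))) \<longlonglongrightarrow> 0"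
    using tendsto_real_sqrt[OF tendsto_mult_right_zero[OF lim, of C]] by simp
  have upper: "H1norm a (\<lambda>p. X n p - form_of G p) \<le> sqrt (C * bergman_sq (\<lambda>z. h n z - G z))" for n
    using H1norm_form_of_sq_bounds(2)[OF a in_bergman_diff[OF h G]]
    by (simp add: Xh form_of_diff C_def real_le_rsqrt)
  have lower: "0 \<le> H1norm a (\<lambda>p. X n p - form_of G p)" for n
    using H1norm_form_of_nonneg[OF a in_bergman_diff[OF h G]] by (simp add: Xh form_of_diff)
  have "(\<lambda>n. H1norm a (\<lambda>p. X n p - form_of G p)) \<longlonglongrightarrow> 0"
    by (rule tendsto_sandwich[OF always_eventually always_eventually tendsto_const upper_lim])
      (use lower upper in auto)
  moreover have "form_of G \<in> FF a"
    using G FF_eq_form_of_bergman[OF a] by blast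
  ultimately show ?thesis
    by blast
qed

theorem lemma3p5:
  fixes a :: real
  assumes "a > 0"
  shows
    "\<comment> \<open>F is a vector space\<close>
     (\<lambda>_. 0) \<in> FF a \<and>
     (\<forall>u\<in>FF a. \<forall>v\<in>FF a. (\<lambda>p. u p + v p) \<in> FF a) \<and>
     (\<forall>u\<in>FF a. \<forall>c::real. (\<lambda>p. c *\<^sub>R u p) \<in> FF a) \<and>
     \<comment> \<open>the H^1 norm is finite on F\<close>
     (\<forall>u\<in>FF a. in_L2 a u \<and> Def_in_L2 a u) \<and>
     \<comment> \<open>it is a norm on F\<close>
     (\<forall>u\<in>FF a. H1norm a u = 0 \<longrightarrow> u = (\<lambda>_. 0)) \<and>
     (\<forall>u\<in>FF a. \<forall>c::real. H1norm a (\<lambda>p. c *\<^sub>R u p) = \<bar>c\<bar> * H1norm a u) \<and>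
     (\<forall>u\<in>FF a. \<forall>v\<in>FF a. H1norm a (\<lambda>p. u p + v p) \<le> H1norm a u + H1norm a v) \<and>
     \<comment> \<open>completeness\<close>
     (\<forall>X. (\<forall>n. X n \<in> FF a) \<and>
          (\<forall>e>0. \<exists>N. \<forall>m\<ge>N. \<forall>n\<ge>N. H1norm a (\<lambda>p. X m p - X n p) < e) \<longrightarrow>
          (\<exists>u\<in>FF a. (\<lambda>n. H1norm a (\<lambda>p. X n p - u p)) \<longlonglongrightarrow> 0))"
proof (intro conjI)
  have a: "a \<noteq> 0"
    using assms by simp
  have FF: "FF a = form_of ` Collect in_bergman"
    by (rule FF_eq_form_of_bergman[OF a])
  show "(\<lambda>_. 0) \<in> FF a"
    unfolding FF using in_bergman_zero by (auto simp: form_of_zero[symmetric])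
  show "\<forall>u\<in>FF a. \<forall>v\<in>FF a. (\<lambda>p. u p + v p) \<in> FF a"
    unfolding FF using in_bergman_add by (auto simp: form_of_add[symmetric])
  show "\<forall>u\<in>FF a. \<forall>c::real. (\<lambda>p. c *\<^sub>R u p) \<in> FF a"
    unfolding FF using in_bergman_scaleR by (auto simp: form_of_scaleR[symmetric])
  show "\<forall>u\<in>FF a. in_L2 a u \<and> Def_in_L2 a u"
    unfolding FF using H1norm_form_of[OF a] by blast
  show "\<forall>u\<in>FF a. H1norm a u = 0 \<longrightarrow> u = (\<lambda>_. 0)"
    unfolding FF using H1norm_form_of_eq_0[OF a] by blast
  show "\<forall>u\<in>FF a. \<forall>c::real. H1norm a (\<lambda>p. c *\<^sub>R u p) = \<bar>c\<bar> * H1norm a u"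
    unfolding FF using H1norm_form_of_scaleR[OF a] by blast
  show "\<forall>u\<in>FF a. \<forall>v\<in>FF a. H1norm a (\<lambda>p. u p + v p) \<le> H1norm a u + H1norm a v"
    unfolding FF using H1norm_form_of_add_le[OF a] by blast
  show "\<forall>X. (\<forall>n. X n \<in> FF a) \<and>
          (\<forall>e>0. \<exists>N. \<forall>m\<ge>N. \<forall>n\<ge>N. H1norm a (\<lambda>p. X m p - X n p) < e) \<longrightarrow>
          (\<exists>u\<in>FF a. (\<lambda>n. H1norm a (\<lambda>p. X n p - u p)) \<longlonglongrightarrow> 0)"
    using FF_complete[OF a] by blast
qed

end
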